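(* Let $X$ be a finite set with $|X|\ge 3$, let $C_i\in\mathcal C_X$, and let $w\in S(X)$ with $w\lessdot C_i$. Then: (i) $w$ is covered by exactly three elements of $S(X)$ if and only if $w$ is obtained from $C_i$ by contracting an internal edge $\alpha$ of $C_i$, and in that case these three elements (all in $\mathcal C_X$, one being $C_i$) are pairwise related by a nearest neighbor interchange over $\alpha$; (ii) $w$ is covered by $C_i$ only if and only if $w$ is obtained from $C_i$ by contracting a leaf edge of $C_i$.
   Context: An $X$-tree is a pair $(T,\phi)$ with $T$ a finite tree and $\phi:X\to V(T)$ a map such that every vertex not in $\phi(X)$ has degree at least $3$; a vertex is labeled if it lies in $\phi(X)$. An $X$-forest is a set $\{(A,\mathcal T_A):A\in\pi\}$ where $\pi$ is a set partition of $X$ and each $\mathcal T_A$ is an $A$-tree. Contracting an edge $e=(u,v)$ removes $e$ and identifies $u,v$, the new vertex carrying the union of the labels of $u$ and $v$. Deleting $e$ removes $e$ without changing vertices; the deletion is safe if each of $u$ and $v$ is labeled or has degree greater than $3$. The Tuffley poset $S(X)$ is the set of $X$-forests ordered by $\mathcal F'\le\mathcal F$ iff $\mathcal F'$ is obtained from $\mathcal F$ by a sequence of contractions and safe deletions; $\mathcal F'\lessdot \mathcal F$ iff $\mathcal F'$ is obtained by a single contraction or safe deletion. $\mathcal C_X$ denotes the set of maximal elements of $S(X)$: trees whose leaves are labeled bijectively by $X$ and whose internal vertices are unlabeled of degree $3$. An internal edge is an edge both of whose endpoints are internal vertices; a leaf edge is one incident to a leaf. Nearest neighbor interchange (NNI):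 for $C\in\mathcal C_X$ and an internal edge $\alpha=(u,v)$, the edge $\alpha$ separates subtrees $A,B$ attached at $u$ from subtrees $C',D$ attached at $v$. Swapping $B$ with $C'$, or swapping $B$ with $D$, yields a new tree in $\mathcal C_X$; obtaining either of these from $C$ is an NNI over $\alpha$. *)

theory Defs
  imports Main
begin

text \<open>Finite graphs with vertices in nat, simple undirected edges (2-element sets),
and a labelling map phi. Only the values of lab on X matter.\<close>

record 'x xgraph =
  verts :: "nat set"
  edges :: "nat set set"
  lab   :: "'x \<Rightarrow> nat"

definition wf_graph :: "'x xgraph \<Rightarrow> bool" where
  "wf_graph G \<longleftrightarrow> finite (verts G) \<and> (\<forall>e\<in>edges G. e \<subseteq> verts G \<and> card e = 2)"

definition deg :: "'x xgraph \<Rightarrow> nat \<Rightarrow> nat" where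
  "deg G v = card {e \<in> edges G. v \<in> e}"

definition adjrel :: "'x xgraph \<Rightarrow> (nat \<times> nat) set" where
  "adjrel G = {(u, v). {u, v} \<in> edges G}"

definition connected_graph :: "'x xgraph \<Rightarrow> bool" where
  "connected_graph G \<longleftrightarrow> (\<forall>u\<in>verts G. \<forall>v\<in>verts G. (u, v) \<in> (adjrel G)\<^sup>*)"

definition acyclic_graph :: "'x xgraph \<Rightarrow> bool" where
  "acyclic_graph G \<longleftrightarrow> \<not> (\<exists>vs. length vs \<ge> 3 \<and> distinct vs \<and> set vs \<subseteq> verts G \<and>
      (\<forall>i < length vs. {vs ! i, vs ! ((i + 1) mod length vs)} \<in> edges G))"

definition is_tree :: "'x xgraph \<Rightarrow> bool" where
  "is_tree G \<longleftrightarrow> wf_graph G \<and> verts G \<noteq> {} \<and> connected_graph G \<and> acyclic_graph G"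

definition labeled :: "'x set \<Rightarrow> 'x xgraph \<Rightarrow> nat \<Rightarrow> bool" where
  "labeled A G v \<longleftrightarrow> v \<in> lab G ` A"

definition is_xtree :: "'x set \<Rightarrow> 'x xgraph \<Rightarrow> bool" where
  "is_xtree A T \<longleftrightarrow> is_tree T \<and> lab T ` A \<subseteq> verts T \<and>
     (\<forall>v\<in>verts T. \<not> labeled A T v \<longrightarrow> deg T v \<ge> 3)"

definition components :: "'x xgraph \<Rightarrow> nat set set" where
  "components G = verts G // {(u, v). u \<in> verts G \<and> v \<in> verts G \<and> (u, v) \<in> (adjrel G)\<^sup>*}"

definition induced :: "'x xgraph \<Rightarrow> nat set \<Rightarrow> 'x xgraph" where
  "induced G K = \<lparr>verts = K, edges = {e \<in> edges G. e \<subseteq> K}, lab = lab G\<rparr>"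

text \<open>An X-forest, represented as the disjoint union of its trees: each connected
component K is an A-tree for the (nonempty) block A of labels placed in K; these
blocks form the partition pi of X.\<close>
definition is_xforest :: "'x set \<Rightarrow> 'x xgraph \<Rightarrow> bool" where
  "is_xforest X F \<longleftrightarrow> wf_graph F \<and> lab F ` X \<subseteq> verts F \<and>
     (\<forall>K\<in>components F. {x \<in> X. lab F x \<in> K} \<noteq> {} \<and>
         is_xtree {x \<in> X. lab F x \<in> K} (induced F K))"

text \<open>Isomorphism of X-forests (elements of S(X) are isomorphism classes).\<close>
definition xiso :: "'x set \<Rightarrow> 'x xgraph \<Rightarrow> 'x xgraph \<Rightarrow> bool" where
  "xiso X F G \<longleftrightarrow> (\<exists>f. bij_betw f (verts F) (verts G) \<and>
     (\<forall>a\<in>verts F. \<forall>b\<in>verts F. {a, b} \<in> edges F \<longleftrightarrow> {f a, f b} \<in> edges G) \<and>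
     (\<forall>x\<in>X. lab G x = f (lab F x)))"

definition contract :: "'x xgraph \<Rightarrow> nat \<Rightarrow> nat \<Rightarrow> 'x xgraph" where
  "contract G u v =
     (let m = (\<lambda>x. if x = v then u else x) in
      \<lparr>verts = verts G - {v}, edges = (\<lambda>e. m ` e) ` (edges G - {{u, v}}), lab = m \<circ> lab G\<rparr>)"

definition delete :: "'x xgraph \<Rightarrow> nat \<Rightarrow> nat \<Rightarrow> 'x xgraph" where
  "delete G u v = G\<lparr>edges := edges G - {{u, v}}\<rparr>"

definition safe_deletion :: "'x set \<Rightarrow> 'x xgraph \<Rightarrow> nat \<Rightarrow> nat \<Rightarrow> bool" where
  "safe_deletion X G u v \<longleftrightarrow> (labeled X G u \<or> deg G u > 3) \<and> (labeled X G v \<or> deg G v > 3)"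

definition one_step :: "'x set \<Rightarrow> 'x xgraph \<Rightarrow> 'x xgraph \<Rightarrow> bool" where
  "one_step X F G \<longleftrightarrow> (\<exists>u v. u \<noteq> v \<and> {u, v} \<in> edges F \<and>
      (G = contract F u v \<or> (safe_deletion X F u v \<and> G = delete F u v)))"

definition covers :: "'x set \<Rightarrow> 'x xgraph \<Rightarrow> 'x xgraph \<Rightarrow> bool" where
  "covers X w F \<longleftrightarrow> is_xforest X w \<and> is_xforest X F \<and> (\<exists>G. one_step X F G \<and> xiso X w G)"

definition cover_classes :: "'x set \<Rightarrow> 'x xgraph \<Rightarrow> 'x xgraph set set" where
  "cover_classes X w = {F. covers X w F} // {(F, G). xiso X F G}"

definition leaves :: "'x xgraph \<Rightarrow> nat set" where
  "leaves G = {v \<in> verts G. deg G v = 1}"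

definition in_CX :: "'x set \<Rightarrow> 'x xgraph \<Rightarrow> bool" where
  "in_CX X C \<longleftrightarrow> is_xtree X C \<and> bij_betw (lab C) X (leaves C) \<and>
     (\<forall>v\<in>verts C - leaves C. \<not> labeled X C v \<and> deg C v = 3)"

definition internal_edge :: "'x xgraph \<Rightarrow> nat \<Rightarrow> nat \<Rightarrow> bool" where
  "internal_edge G u v \<longleftrightarrow> u \<noteq> v \<and> {u, v} \<in> edges G \<and> u \<notin> leaves G \<and> v \<notin> leaves G"

definition leaf_edge :: "'x xgraph \<Rightarrow> nat \<Rightarrow> nat \<Rightarrow> bool" where
  "leaf_edge G u v \<longleftrightarrow> u \<noteq> v \<and> {u, v} \<in> edges G \<and> (u \<in> leaves G \<or> v \<in> leaves G)"

definition nni_swap :: "'x xgraph \<Rightarrow> nat \<Rightarrow> nat \<Rightarrow> nat \<Rightarrow> nat \<Rightarrow> 'x xgraph" where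
  "nni_swap G u b v c = G\<lparr>edges := (edges G - {{u, b}, {v, c}}) \<union> {{u, c}, {v, b}}\<rparr>"

definition is_nni :: "'x set \<Rightarrow> 'x xgraph \<Rightarrow> nat \<Rightarrow> nat \<Rightarrow> 'x xgraph \<Rightarrow> bool" where
  "is_nni X F u v G \<longleftrightarrow> internal_edge F u v \<and>
     (\<exists>b c. {u, b} \<in> edges F \<and> b \<noteq> v \<and> {v, c} \<in> edges F \<and> c \<noteq> u \<and>
            xiso X G (nni_swap F u b v c))"

end

theory Submission
  imports Defs
begin

(*
  Every cover F of w arises by contracting an edge: w is connected, deleting an edge of a
  forest disconnects it, and a binary tree admits no safe deletion once |X| >= 3.  Hence w is
  isomorphic to F/uv for an edge uv of F, and an isomorphism from C/ab to F/uv sends the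
  contracted vertex a to u, since these are the only vertices whose degree and labels break
  the pattern of a binary tree.  Undoing the contraction is then determined by how the
  isomorphism distributes the neighbours of a between u and v.  For a leaf edge ab this
  distribution is forced, so F is isomorphic to C.  For an internal edge ab the contracted
  vertex has four neighbours, split two against two; the three splittings are realised by C
  and its two nearest neighbour interchanges over ab, which are pairwise non-isomorphic
  because they display different quartets of leaves.
*)

section \<open>Neighbourhoods and contraction\<close>

definition nbrs :: "'x xgraph \<Rightarrow> nat \<Rightarrow> nat set" where
  "nbrs G t = {s. {t, s} \<in> edges G}"

definition labels :: "'x set \<Rightarrow> 'x xgraph \<Rightarrow> nat \<Rightarrow> 'x set" where
  "labels X G t = {x \<in> X. lab G x = t}"

definition walk :: "nat set set \<Rightarrow> nat list \<Rightarrow> bool" where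
  "walk E ps \<longleftrightarrow> (\<forall>i. Suc i < length ps \<longrightarrow> {ps!i, ps!Suc i} \<in> E)"

definition adj :: "nat set set \<Rightarrow> (nat \<times> nat) set" where
  "adj E = {(u,v). {u,v} \<in> E}"

lemma adjrel_eq: "adjrel G = adj (edges G)" by (simp add: adjrel_def adj_def)

lemma adj_iff[simp]: "(u,v) \<in> adj E \<longleftrightarrow> {u,v} \<in> E" by (simp add: adj_def)

lemma adj_sym: "(u,v) \<in> (adj E)\<^sup>* \<Longrightarrow> (v,u) \<in> (adj E)\<^sup>*"
proof (induction rule: rtrancl_induct)
  case base then show ?case by simp
next
  case (step y z)
  have "(z,y) \<in> adj E" using step(2) by (simp add: insert_commute)
  then show ?case using step(3) by (meson converse_rtrancl_into_rtrancl)
qed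

lemma adj_mono: "E \<subseteq> E' \<Longrightarrow> (u,v) \<in> (adj E)\<^sup>* \<Longrightarrow> (u,v) \<in> (adj E')\<^sup>*"
  by (erule rtrancl_mono[THEN subsetD, rotated]) (auto simp: adj_def)

lemma wf_edge: "wf_graph G \<Longrightarrow> e \<in> edges G \<Longrightarrow> \<exists>x y. e = {x,y} \<and> x \<noteq> y \<and> x \<in> verts G \<and> y \<in> verts G"
  unfolding wf_graph_def by (metis card_2_iff insert_subset)

lemma wf_edge2: "wf_graph G \<Longrightarrow> {x,y} \<in> edges G \<Longrightarrow> x \<noteq> y \<and> x \<in> verts G \<and> y \<in> verts G"
  unfolding wf_graph_def by (metis card_2_iff doubleton_eq_iff insert_subset)

lemma nbrs_verts: "wf_graph G \<Longrightarrow> nbrs G t \<subseteq> verts G"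
  unfolding nbrs_def using wf_edge2 by blast

lemma nbrs_finite: "wf_graph G \<Longrightarrow> finite (nbrs G t)"
  using nbrs_verts wf_graph_def finite_subset by metis

lemma nbrs_iff: "s \<in> nbrs G t \<longleftrightarrow> {t,s} \<in> edges G" by (simp add: nbrs_def)

lemma deg_nbrs: assumes "wf_graph G" shows "deg G t = card (nbrs G t)"
proof -
  have eq: "{e \<in> edges G. t \<in> e} = (\<lambda>s. {t,s}) ` nbrs G t"
  proof
    show "{e \<in> edges G. t \<in> e} \<subseteq> (\<lambda>s. {t,s}) ` nbrs G t"
    proof
      fix e assume "e \<in> {e \<in> edges G. t \<in> e}"
      then obtain x y where e: "e = {x,y}" "e \<in> edges G" "t \<in> e" using wf_edge[OF assms] by blast
      then show "e \<in> (\<lambda>s. {t,s}) ` nbrs G t"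
        by (auto simp: nbrs_def insert_commute)
    qed
  qed (auto simp: nbrs_def)
  have inj: "inj_on (\<lambda>s. {t,s}) (nbrs G t)"
  proof
    fix s s' assume "s \<in> nbrs G t" "s' \<in> nbrs G t" "{t,s} = {t,s'}"
    then show "s = s'" using wf_edge2[OF assms] by (auto simp: nbrs_def doubleton_eq_iff)
  qed
  show ?thesis unfolding deg_def eq card_image[OF inj] ..
qed

definition no_common_nbr :: "'x xgraph \<Rightarrow> nat \<Rightarrow> nat \<Rightarrow> bool" where
  "no_common_nbr G u v \<longleftrightarrow> (\<forall>t. \<not> ({u,t} \<in> edges G \<and> {v,t} \<in> edges G))"

lemma contract_simps:
  "verts (contract G u v) = verts G - {v}"
  "lab (contract G u v) = (\<lambda>x. if x = v then u else x) \<circ> lab G"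
  "edges (contract G u v) = (\<lambda>e. (\<lambda>x. if x = v then u else x) ` e) ` (edges G - {{u,v}})"
  by (simp_all add: contract_def Let_def)

lemma contract_map_fixes: "u \<notin> (\<lambda>x. if x = v then u else (x::nat)) ` e \<Longrightarrow> (\<lambda>x. if x = v then u else x) ` e = e"
proof -
  assume h: "u \<notin> (\<lambda>x. if x = v then u else (x::nat)) ` e"
  have "\<forall>x\<in>e. x \<noteq> v"
  proof
    fix x assume "x \<in> e" show "x \<noteq> v"
    proof
      assume "x = v" then have "u \<in> (\<lambda>x. if x = v then u else (x::nat)) ` e" using \<open>x \<in> e\<close> by force
      then show False using h by blast
    qed
  qed
  then show ?thesis by (simp cong: image_cong)
qed

lemma contract_map_pair: "(\<lambda>x. if x = v then u else (x::nat)) ` {p,q} = {if p = v then u else p, if q = v then u else q}"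
  by simp

lemma contract_edge_away:
  assumes wf: "wf_graph G" and x: "x \<notin> {u,v}" and y: "y \<notin> {u,v}"
  shows "{x,y} \<in> edges (contract G u v) \<longleftrightarrow> {x,y} \<in> edges G"
proof
  assume "{x,y} \<in> edges G"
  moreover have "(\<lambda>x. if x = v then u else x) ` {x,y} = {x,y}" using x y by auto
  moreover have "{x,y} \<noteq> {u,v}" using x by auto
  ultimately show "{x,y} \<in> edges (contract G u v)" unfolding contract_simps
    by (intro image_eqI[where x="{x,y}"]) auto
next
  assume "{x,y} \<in> edges (contract G u v)"
  then obtain e where e: "e \<in> edges G" "{x,y} = (\<lambda>x. if x = v then u else x) ` e"
    unfolding contract_simps by blast
  have "u \<notin> {x,y}" using x y by auto
  then have "(\<lambda>x. if x = v then u else x) ` e = e" using contract_map_fixes e(2) by metis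
  with e show "{x,y} \<in> edges G" by simp
qed

lemma contract_edge_at_centre:
  assumes wf: "wf_graph G" and y: "y \<notin> {u,v}"
  shows "{u,y} \<in> edges (contract G u v) \<longleftrightarrow> ({u,y} \<in> edges G \<or> {v,y} \<in> edges G)"
proof
  assume "{u,y} \<in> edges G \<or> {v,y} \<in> edges G"
  then obtain e where e: "e \<in> edges G" "e = {u,y} \<or> e = {v,y}" by blast
  moreover have "(\<lambda>x. if x = v then u else x) ` e = {u,y}" using e(2) y by auto
  moreover have "e \<noteq> {u,v}" using e(2) y by (auto simp: doubleton_eq_iff)
  ultimately show "{u,y} \<in> edges (contract G u v)" unfolding contract_simps
    by (intro image_eqI[where x=e]) auto
next
  assume "{u,y} \<in> edges (contract G u v)"
  then obtain e where e: "e \<in> edges G" "{u,y} = (\<lambda>x. if x = v then u else x) ` e"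
    unfolding contract_simps by blast
  then obtain p q where pq: "e = {p,q}" using wf_edge[OF wf] by blast
  have eq: "{u,y} = {if p = v then u else p, if q = v then u else q}" using e(2) pq by (simp only: contract_map_pair)
  have yi: "y \<in> {if p = v then u else p, if q = v then u else q}" unfolding eq[symmetric] by simp
  have ui: "u \<in> {if p = v then u else p, if q = v then u else q}" unfolding eq[symmetric] by simp
  show "{u,y} \<in> edges G \<or> {v,y} \<in> edges G"
  proof (cases "(if p = v then u else p) = y")
    case True
    then have p: "p = y" using y by (auto split: if_splits)
    then have "(if q = v then u else q) = u" using ui y by auto
    then have "q = u \<or> q = v" by (auto split: if_splits)
    then show ?thesis using e(1) pq p by (auto simp: insert_commute)
  next
    case False
    then have qy: "(if q = v then u else q) = y" using yi by auto
    then have q: "q = y" using y by (auto split: if_splits)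
    have "(if p = v then u else p) = u" using ui y q qy False by auto
    then have "p = u \<or> p = v" by (auto split: if_splits)
    then show ?thesis using e(1) pq q by auto
  qed
qed

lemma card_Diff_singleton_Suc: "finite N \<Longrightarrow> v \<in> N \<Longrightarrow> card (N - {v}) + 1 = card N"
  by (metis One_nat_def Suc_pred add.right_neutral add_Suc_right card_Diff_singleton card_gt_0_iff empty_iff)

lemma contract_edge_avoids: "u \<noteq> v \<Longrightarrow> e \<in> edges (contract G u v) \<Longrightarrow> v \<notin> e"
  unfolding contract_simps by auto

lemma wf_contract:
  assumes wf: "wf_graph G" and uv: "{u,v} \<in> edges G"
  shows "wf_graph (contract G u v)"
proof -
  have uv': "u \<noteq> v" "u \<in> verts G" "v \<in> verts G" using wf_edge2[OF wf uv] by auto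
  have "e' \<subseteq> verts G - {v} \<and> card e' = 2" if h: "e' \<in> edges (contract G u v)" for e'
  proof -
    obtain e where e: "e \<in> edges G" "e \<noteq> {u,v}" "e' = (\<lambda>x. if x = v then u else x) ` e"
      using h unfolding contract_simps by blast
    obtain p q where pq: "e = {p,q}" "p \<noteq> q" "p \<in> verts G" "q \<in> verts G" using wf_edge[OF wf e(1)] by blast
    have "e' = {if p = v then u else p, if q = v then u else q}" using e(3) pq by auto
    moreover have "(if p = v then u else p) \<noteq> (if q = v then u else q)"
      using pq e(2) uv' by (auto simp: doubleton_eq_iff)
    ultimately show ?thesis using pq uv' by auto
  qed
  then show ?thesis using wf unfolding wf_graph_def contract_simps by auto
qed

lemma no_common_nbr_sym: "no_common_nbr G u v = no_common_nbr G v u"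
  unfolding no_common_nbr_def by blast

lemma contract_nbrs_centre:
  assumes wf: "wf_graph G" and uv: "{u,v} \<in> edges G"
  shows "nbrs (contract G u v) u = (nbrs G u \<union> nbrs G v) - {u,v}"
proof -
  have uv': "u \<noteq> v" using wf_edge2[OF wf uv] by auto
  show ?thesis
  proof (rule set_eqI)
    fix y
    show "y \<in> nbrs (contract G u v) u \<longleftrightarrow> y \<in> (nbrs G u \<union> nbrs G v) - {u,v}"
    proof (cases "y \<in> {u,v}")
      case True
      have "{u,y} \<notin> edges (contract G u v)"
      proof
        assume h: "{u,y} \<in> edges (contract G u v)"
        have "wf_graph (contract G u v)" using wf_contract[OF wf uv] .
        then have "u \<noteq> y" using wf_edge2 h by blast
        then have "y = v" using True by auto
        then show False using contract_edge_avoids[OF uv' h] by auto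
      qed
      then show ?thesis using True by (simp add: nbrs_iff)
    next
      case False
      then show ?thesis using contract_edge_at_centre[OF wf False] by (auto simp: nbrs_iff)
    qed
  qed
qed

lemma contract_nbrs_centre_Un:
  assumes wf: "wf_graph G" and uv: "{u,v} \<in> edges G"
  shows "nbrs (contract G u v) u = (nbrs G u - {v}) \<union> (nbrs G v - {u})"
proof -
  have "u \<notin> nbrs G u" "v \<notin> nbrs G v"
    using wf_edge2[OF wf, of u u] wf_edge2[OF wf, of v v] by (auto simp: nbrs_iff)
  then show ?thesis unfolding contract_nbrs_centre[OF wf uv] by blast
qed

lemma contract_nbrs_other:
  assumes wf: "wf_graph G" and uv: "{u,v} \<in> edges G" and t: "t \<notin> {u,v}"
  shows "nbrs (contract G u v) t = (nbrs G t - {v}) \<union> (if v \<in> nbrs G t then {u} else {})"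
proof -
  have uv': "u \<noteq> v" using wf_edge2[OF wf uv] by auto
  show ?thesis
  proof (rule set_eqI)
    fix y
    show "y \<in> nbrs (contract G u v) t \<longleftrightarrow> y \<in> (nbrs G t - {v}) \<union> (if v \<in> nbrs G t then {u} else {})"
    proof (cases "y = v")
      case True
      then show ?thesis using contract_edge_avoids[OF uv', of _ G] uv' by (auto simp: nbrs_iff)
    next
      case yv: False
      show ?thesis
      proof (cases "y = u")
        case True
        then show ?thesis using contract_edge_at_centre[OF wf t] uv' by (auto simp: nbrs_iff insert_commute)
      next
        case False
        then show ?thesis using contract_edge_away[OF wf t, of y] yv by (auto simp: nbrs_iff)
      qed
    qed
  qed
qed

lemma contract_deg_other:
  assumes wf: "wf_graph G" and uv: "{u,v} \<in> edges G" and t: "t \<notin> {u,v}" and nc: "no_common_nbr G u v"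
  shows "deg (contract G u v) t = deg G t"
proof -
  have wf': "wf_graph (contract G u v)" by (rule wf_contract[OF wf uv])
  have fin: "finite (nbrs G t)" using nbrs_finite[OF wf] .
  show ?thesis
  proof (cases "v \<in> nbrs G t")
    case True
    then have "u \<notin> nbrs G t" using nc by (auto simp: no_common_nbr_def nbrs_iff insert_commute)
    then have "card ((nbrs G t - {v}) \<union> {u}) = card (nbrs G t)"
      using True fin card_Diff_singleton_Suc[OF fin True] by (simp add: card_insert_disjoint)
    then show ?thesis using True by (simp add: deg_nbrs[OF wf] deg_nbrs[OF wf'] contract_nbrs_other[OF wf uv t])
  next
    case False
    then show ?thesis by (simp add: deg_nbrs[OF wf] deg_nbrs[OF wf'] contract_nbrs_other[OF wf uv t])
  qed
qed

lemma contract_deg_centre: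
  assumes wf: "wf_graph G" and uv: "{u,v} \<in> edges G" and nc: "no_common_nbr G u v"
  shows "deg (contract G u v) u + 2 = deg G u + deg G v"
proof -
  have wf': "wf_graph (contract G u v)" by (rule wf_contract[OF wf uv])
  have uv': "u \<noteq> v" using wf_edge2[OF wf uv] by auto
  have fu: "finite (nbrs G u)" and fv: "finite (nbrs G v)" using nbrs_finite[OF wf] by auto
  have vu: "v \<in> nbrs G u" "u \<in> nbrs G v" using uv by (auto simp: nbrs_iff insert_commute)
  have uu: "u \<notin> nbrs G u" "v \<notin> nbrs G v" using wf_edge2[OF wf, of u u] wf_edge2[OF wf, of v v] by (auto simp: nbrs_iff)
  have disj: "nbrs G u \<inter> nbrs G v = {}" using nc by (auto simp: no_common_nbr_def nbrs_iff)
  have "(nbrs G u \<union> nbrs G v) - {u,v} = (nbrs G u - {v}) \<union> (nbrs G v - {u})"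
    using uu by auto
  moreover have "card ((nbrs G u - {v}) \<union> (nbrs G v - {u})) = card (nbrs G u - {v}) + card (nbrs G v - {u})"
    by (rule card_Un_disjoint) (use fu fv disj in auto)
  moreover have "card (nbrs G u - {v}) + 1 = card (nbrs G u)" "card (nbrs G v - {u}) + 1 = card (nbrs G v)"
    using card_Diff_singleton_Suc[OF fu vu(1)] card_Diff_singleton_Suc[OF fv vu(2)] by auto
  ultimately show ?thesis
    by (simp add: deg_nbrs[OF wf] deg_nbrs[OF wf'] contract_nbrs_centre[OF wf uv])
qed

lemma contract_labels_other:
  "t \<noteq> u \<Longrightarrow> t \<noteq> v \<Longrightarrow> labels X (contract G u v) t = labels X G t"
  by (auto simp: labels_def contract_simps)

lemma contract_labels_centre:
  "labels X (contract G u v) u = labels X G u \<union> labels X G v"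
  by (auto simp: labels_def contract_simps)

section \<open>Isomorphisms of labelled graphs\<close>

definition isom :: "'x set \<Rightarrow> 'x xgraph \<Rightarrow> 'x xgraph \<Rightarrow> (nat \<Rightarrow> nat) \<Rightarrow> bool" where
  "isom X F G f \<longleftrightarrow> bij_betw f (verts F) (verts G) \<and>
     (\<forall>a\<in>verts F. \<forall>b\<in>verts F. {a, b} \<in> edges F \<longleftrightarrow> {f a, f b} \<in> edges G) \<and>
     (\<forall>x\<in>X. lab G x = f (lab F x))"

lemma xiso_isom: "xiso X F G \<longleftrightarrow> (\<exists>f. isom X F G f)"
  by (simp add: xiso_def isom_def)

lemma xiso_refl: "xiso X G G"
  unfolding xiso_isom isom_def by (rule exI[of _ id]) auto

lemma isom_sym:
  assumes iso: "isom X F G f" and lv: "lab F ` X \<subseteq> verts F"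
  shows "isom X G F (inv_into (verts F) f)"
proof -
  let ?g = "inv_into (verts F) f"
  have bij: "bij_betw f (verts F) (verts G)" using iso by (simp add: isom_def)
  have bij': "bij_betw ?g (verts G) (verts F)" by (rule bij_betw_inv_into[OF bij])
  have fg: "f (?g a) = a" if "a \<in> verts G" for a
    using that bij by (metis bij_betw_imp_surj_on f_inv_into_f)
  have gv: "?g a \<in> verts F" if "a \<in> verts G" for a using that bij' bij_betwE by blast
  have e: "{a,b} \<in> edges G \<longleftrightarrow> {?g a, ?g b} \<in> edges F" if "a \<in> verts G" "b \<in> verts G" for a b
  proof -
    have "{?g a, ?g b} \<in> edges F \<longleftrightarrow> {f (?g a), f (?g b)} \<in> edges G"
      using iso gv[OF that(1)] gv[OF that(2)] unfolding isom_def by blast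
    then show ?thesis using fg that by simp
  qed
  have l: "lab F x = ?g (lab G x)" if "x \<in> X" for x
  proof -
    have "lab G x = f (lab F x)" using iso that by (simp add: isom_def)
    moreover have "inj_on f (verts F)" using bij bij_betw_def by blast
    ultimately show ?thesis using lv that by (simp add: inv_into_f_f image_subset_iff)
  qed
  show ?thesis unfolding isom_def using bij' e l by blast
qed

lemma xiso_sym: "lab F ` X \<subseteq> verts F \<Longrightarrow> xiso X F G \<Longrightarrow> xiso X G F"
  using isom_sym xiso_isom by metis

lemma isom_trans:
  assumes "isom X F G f" "isom X G H g" shows "isom X F H (g \<circ> f)"
proof -
  have b1: "bij_betw f (verts F) (verts G)" and b2: "bij_betw g (verts G) (verts H)"
    using assms by (auto simp: isom_def)
  have fv: "f a \<in> verts G" if "a \<in> verts F" for a using b1 that bij_betwE by blast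
  show ?thesis unfolding isom_def
  proof (intro conjI ballI)
    show "bij_betw (g \<circ> f) (verts F) (verts H)" using b1 b2 bij_betw_trans by blast
  next
    fix a b assume "a \<in> verts F" "b \<in> verts F"
    then show "{a, b} \<in> edges F \<longleftrightarrow> {(g \<circ> f) a, (g \<circ> f) b} \<in> edges H"
      using assms fv unfolding isom_def by simp
  next
    fix x assume "x \<in> X" then show "lab H x = (g \<circ> f) (lab F x)" using assms by (simp add: isom_def)
  qed
qed

lemma xiso_trans: "xiso X F G \<Longrightarrow> xiso X G H \<Longrightarrow> xiso X F H"
  using isom_trans xiso_isom by metis

lemma isom_nbrs:
  assumes iso: "isom X F G f" and wF: "wf_graph F" and wG: "wf_graph G" and t: "t \<in> verts F"
  shows "nbrs G (f t) = f ` nbrs F t"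
proof -
  have bij: "bij_betw f (verts F) (verts G)" using iso by (simp add: isom_def)
  have e: "{a,b} \<in> edges F \<longleftrightarrow> {f a, f b} \<in> edges G" if "a \<in> verts F" "b \<in> verts F" for a b
    using iso that by (simp add: isom_def)
  show ?thesis
  proof
    show "nbrs G (f t) \<subseteq> f ` nbrs F t"
    proof
      fix s assume s: "s \<in> nbrs G (f t)"
      then have "s \<in> verts G" using nbrs_verts[OF wG] by blast
      then obtain s0 where s0: "s0 \<in> verts F" "s = f s0" using bij by (metis bij_betw_imp_surj_on imageE)
      then have "{t,s0} \<in> edges F" using e[OF t s0(1)] s by (simp add: nbrs_iff)
      then show "s \<in> f ` nbrs F t" using s0 by (simp add: nbrs_iff)
    qed
  next
    show "f ` nbrs F t \<subseteq> nbrs G (f t)"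
    proof
      fix s assume "s \<in> f ` nbrs F t"
      then obtain s0 where s0: "s0 \<in> nbrs F t" "s = f s0" by blast
      then have "s0 \<in> verts F" using nbrs_verts[OF wF] by blast
      then show "s \<in> nbrs G (f t)" using e[OF t] s0 by (simp add: nbrs_iff)
    qed
  qed
qed

lemma isom_deg:
  assumes iso: "isom X F G f" and wF: "wf_graph F" and wG: "wf_graph G" and t: "t \<in> verts F"
  shows "deg G (f t) = deg F t"
proof -
  have bij: "bij_betw f (verts F) (verts G)" using iso by (simp add: isom_def)
  have "inj_on f (nbrs F t)" using bij nbrs_verts[OF wF] by (meson bij_betw_def inj_on_subset)
  then show ?thesis using isom_nbrs[OF assms] by (simp add: deg_nbrs[OF wF] deg_nbrs[OF wG] card_image)
qed

lemma isom_labels: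
  assumes iso: "isom X F G f" and lv: "lab F ` X \<subseteq> verts F" and t: "t \<in> verts F"
  shows "labels X G (f t) = labels X F t"
proof -
  have bij: "bij_betw f (verts F) (verts G)" using iso by (simp add: isom_def)
  then have inj: "inj_on f (verts F)" by (simp add: bij_betw_def)
  show ?thesis unfolding labels_def
  proof (intro Collect_cong conj_cong refl)
    fix x assume x: "x \<in> X"
    then have "lab G x = f (lab F x)" using iso by (simp add: isom_def)
    moreover have "lab F x \<in> verts F" using lv x by blast
    ultimately show "(lab G x = f t) = (lab F x = t)" using inj t by (metis inj_onD)
  qed
qed

lemma isom_edge:
  "isom X F G f \<Longrightarrow> a \<in> verts F \<Longrightarrow> b \<in> verts F \<Longrightarrow> {a, b} \<in> edges F \<longleftrightarrow> {f a, f b} \<in> edges G"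
  by (simp add: isom_def)

lemma isom_lab: "isom X F G f \<Longrightarrow> x \<in> X \<Longrightarrow> lab G x = f (lab F x)"
  by (simp add: isom_def)

lemma isom_inj: "isom X F G f \<Longrightarrow> inj_on f (verts F)"
  by (simp add: isom_def bij_betw_def)

lemma isom_surj: "isom X F G f \<Longrightarrow> f ` verts F = verts G"
  by (simp add: isom_def bij_betw_def)

lemma isom_of_edge_image:
  assumes bij: "bij_betw f (verts F) (verts G)"
    and E: "edges G = (\<lambda>e. f ` e) ` edges F"
    and sub: "\<forall>e\<in>edges F. e \<subseteq> verts F"
    and L: "\<forall>x\<in>X. lab G x = f (lab F x)"
  shows "isom X F G f"
  unfolding isom_def
proof (intro conjI ballI bij)
  fix a b assume ab: "a \<in> verts F" "b \<in> verts F"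
  have inj: "inj_on f (verts F)" using bij by (simp add: bij_betw_def)
  show "{a, b} \<in> edges F \<longleftrightarrow> {f a, f b} \<in> edges G"
  proof
    assume "{a,b} \<in> edges F"
    then have "f ` {a,b} \<in> (\<lambda>e. f ` e) ` edges F" by (rule imageI)
    then show "{f a, f b} \<in> edges G" unfolding E by simp
  next
    assume "{f a, f b} \<in> edges G"
    then obtain e where e: "e \<in> edges F" "{f a, f b} = f ` e" unfolding E by blast
    have s1: "{a,b} \<subseteq> verts F" and s2: "e \<subseteq> verts F" using ab sub e by auto
    have "{a,b} = e" using inj_on_image_eq_iff[OF inj s1 s2] e(2) by simp
    then show "{a,b} \<in> edges F" using e by simp
  qed
next
  fix x assume "x \<in> X" then show "lab G x = f (lab F x)" using L by simp
qed

lemma isom_contract_swap: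
  assumes wf: "wf_graph G" and uv: "{u,v} \<in> edges G"
  shows "isom X (contract G u v) (contract G v u) (\<lambda>x. if x = u then v else x)"
proof -
  have uv': "u \<noteq> v" "u \<in> verts G" "v \<in> verts G" using wf_edge2[OF wf uv] by auto
  let ?s = "\<lambda>x. if x = u then v else (x::nat)"
  let ?m = "\<lambda>x. if x = v then u else (x::nat)"
  let ?m' = "\<lambda>x. if x = u then v else (x::nat)"
  have mm: "?m' = ?s \<circ> ?m" using uv' by (auto simp: fun_eq_iff)
  have bij: "bij_betw ?s (verts G - {v}) (verts G - {u})"
  proof (rule bij_betw_imageI)
    show "inj_on ?s (verts G - {v})" unfolding inj_on_def by auto
    show "?s ` (verts G - {v}) = verts G - {u}"
    proof
      show "?s ` (verts G - {v}) \<subseteq> verts G - {u}" using uv' by auto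
      show "verts G - {u} \<subseteq> ?s ` (verts G - {v})"
      proof
        fix x assume x: "x \<in> verts G - {u}"
        show "x \<in> ?s ` (verts G - {v})"
        proof (cases "x = v")
          case True then show ?thesis using uv' by (intro image_eqI[where x=u]) auto
        next
          case False then show ?thesis using x by (intro image_eqI[where x=x]) auto
        qed
      qed
    qed
  qed
  have E: "edges (contract G v u) = (\<lambda>e. ?s ` e) ` edges (contract G u v)"
  proof -
    have "{v,u} = {u,v}" by (simp add: insert_commute)
    then have "edges (contract G v u) = (\<lambda>e. ?m' ` e) ` (edges G - {{u,v}})"
      by (simp add: contract_simps)
    also have "\<dots> = (\<lambda>e. ?s ` (?m ` e)) ` (edges G - {{u,v}})"
    proof -
      have pe: "?s ` (?m ` e) = ?m' ` e" for e by (simp only: image_comp mm[symmetric])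
      show ?thesis by (simp only: pe)
    qed
    also have "\<dots> = (\<lambda>e. ?s ` e) ` edges (contract G u v)"
      by (subst contract_simps(3)) (rule image_image[symmetric])
    finally show ?thesis .
  qed
  have sub: "\<forall>e\<in>edges (contract G u v). e \<subseteq> verts (contract G u v)"
    using wf_contract[OF wf uv] unfolding wf_graph_def by blast
  have L: "\<forall>x\<in>X. lab (contract G v u) x = ?s (lab (contract G u v) x)"
    using uv' by (auto simp: contract_simps)
  show ?thesis
    by (rule isom_of_edge_image) (use bij E sub L in \<open>simp_all add: contract_simps\<close>)
qed

lemma adj_rtrancl_map:
  assumes "\<And>y z. {y,z} \<in> E \<Longrightarrow> (h y, h z) \<in> (adj E')\<^sup>*"
    and "(a,b) \<in> (adj E)\<^sup>*"
  shows "(h a, h b) \<in> (adj E')\<^sup>*"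
  using assms(2)
proof (induction rule: rtrancl_induct)
  case base then show ?case by simp
next
  case (step y z) then show ?case using assms(1)[of y z] by (meson adj_iff rtrancl_trans)
qed

lemma isom_connected:
  assumes iso: "isom X F G f" and wF: "wf_graph F" and c: "connected_graph F"
  shows "connected_graph G"
  unfolding connected_graph_def adjrel_eq
proof (intro ballI)
  fix a b assume ab: "a \<in> verts G" "b \<in> verts G"
  obtain a0 b0 where a0: "a0 \<in> verts F" "a = f a0" and b0: "b0 \<in> verts F" "b = f b0"
    using ab isom_surj[OF iso] by (metis imageE)
  have r: "(a0,b0) \<in> (adj (edges F))\<^sup>*" using c a0 b0 by (simp add: connected_graph_def adjrel_eq)
  have "(f a0, f b0) \<in> (adj (edges G))\<^sup>*"
  proof (rule adj_rtrancl_map[OF _ r])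
    fix y z assume "{y,z} \<in> edges F"
    moreover then have "y \<in> verts F" "z \<in> verts F" using wf_edge2[OF wF] by auto
    ultimately show "(f y, f z) \<in> (adj (edges G))\<^sup>*" using isom_edge[OF iso] by auto
  qed
  then show "(a,b) \<in> (adj (edges G))\<^sup>*" using a0 b0 by simp
qed

lemma contract_connected:
  assumes wf: "wf_graph G" and uv: "{u,v} \<in> edges G" and c: "connected_graph G"
  shows "connected_graph (contract G u v)"
  unfolding connected_graph_def adjrel_eq
proof (intro ballI)
  let ?m = "\<lambda>x. if x = v then u else (x::nat)"
  fix a b assume ab: "a \<in> verts (contract G u v)" "b \<in> verts (contract G u v)"
  then have ab': "a \<in> verts G" "b \<in> verts G" "a \<noteq> v" "b \<noteq> v" by (auto simp: contract_simps)
  have r: "(a,b) \<in> (adj (edges G))\<^sup>*" using c ab' by (simp add: connected_graph_def adjrel_eq)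
  have "(?m a, ?m b) \<in> (adj (edges (contract G u v)))\<^sup>*"
  proof (rule adj_rtrancl_map[OF _ r])
    fix y z assume yz: "{y,z} \<in> edges G"
    show "(?m y, ?m z) \<in> (adj (edges (contract G u v)))\<^sup>*"
    proof (cases "{y,z} = {u,v}")
      case True then have "?m y = ?m z" by (auto simp: doubleton_eq_iff)
      then show ?thesis by simp
    next
      case False
      have "?m ` {y,z} \<in> edges (contract G u v)" unfolding contract_simps using yz False by blast
      moreover have "?m ` {y,z} = {?m y, ?m z}" by (rule contract_map_pair)
      ultimately have "(?m y, ?m z) \<in> adj (edges (contract G u v))" unfolding adj_iff by metis
      then show ?thesis by (rule r_into_rtrancl)
    qed
  qed
  then show "(a,b) \<in> (adj (edges (contract G u v)))\<^sup>*" using ab' by simp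
qed

lemma connected_uncontract:
  assumes wf: "wf_graph G" and uv: "{u,v} \<in> edges G" and c: "connected_graph (contract G u v)"
  shows "connected_graph G"
  unfolding connected_graph_def adjrel_eq
proof (intro ballI)
  let ?m = "\<lambda>x. if x = v then u else (x::nat)"
  have uv': "u \<noteq> v" "u \<in> verts G" "v \<in> verts G" using wf_edge2[OF wf uv] by auto
  have same: "(s, s') \<in> (adj (edges G))\<^sup>*" if "?m s = ?m s'" for s s'
  proof (cases "s = s'")
    case True then show ?thesis by simp
  next
    case False
    then have "{s,s'} = {u,v}" using that by (auto split: if_splits)
    then have "(s,s') \<in> adj (edges G)" using uv by simp
    then show ?thesis by blast
  qed
  have main: "(s, t) \<in> (adj (edges G))\<^sup>*"
    if r: "(s', t') \<in> (adj (edges (contract G u v)))\<^sup>*" and st: "?m s = s'" "?m t = t'" for s' t' s t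
    using r st(2)
  proof (induction arbitrary: t rule: rtrancl_induct)
    case base then show ?case using same st(1) by simp
  next
    case (step y' z')
    obtain e where e: "e \<in> edges G" "{y',z'} = ?m ` e" using step(2) unfolding contract_simps by auto
    obtain p q where pq: "e = {p,q}" using wf_edge[OF wf e(1)] by blast
    have "{y',z'} = {?m p, ?m q}" using e(2) pq by simp
    then consider "?m p = y'" "?m q = z'" | "?m q = y'" "?m p = z'" by (auto simp: doubleton_eq_iff)
    then show ?case
    proof cases
      case 1
      have "(s, p) \<in> (adj (edges G))\<^sup>*" using step(3)[of p] 1 by simp
      moreover have "(p,q) \<in> adj (edges G)" using e pq by simp
      moreover have "(q, t) \<in> (adj (edges G))\<^sup>*" using same 1 step(4) by simp
      ultimately show ?thesis by (meson rtrancl_into_rtrancl rtrancl_trans)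
    next
      case 2
      have "(s, q) \<in> (adj (edges G))\<^sup>*" using step(3)[of q] 2 by simp
      moreover have "(q,p) \<in> adj (edges G)" using e pq by (simp add: insert_commute)
      moreover have "(p, t) \<in> (adj (edges G))\<^sup>*" using same 2 step(4) by simp
      ultimately show ?thesis by (meson rtrancl_into_rtrancl rtrancl_trans)
    qed
  qed
  fix a b assume ab: "a \<in> verts G" "b \<in> verts G"
  have "?m a \<in> verts (contract G u v)" "?m b \<in> verts (contract G u v)"
    using ab uv' by (auto simp: contract_simps)
  then have "(?m a, ?m b) \<in> (adj (edges (contract G u v)))\<^sup>*"
    using c by (simp add: connected_graph_def adjrel_eq)
  then show "(a,b) \<in> (adj (edges G))\<^sup>*" using main by blast
qed

section \<open>Walks, cycles and forests\<close>

lemma walk_take: "walk E ps \<Longrightarrow> walk E (take k ps)"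
  unfolding walk_def by auto

lemma walk_drop: "walk E ps \<Longrightarrow> walk E (drop k ps)"
  unfolding walk_def by (auto simp: add.commute)

lemma walk_snoc: "walk E ps \<Longrightarrow> ps \<noteq> [] \<Longrightarrow> {last ps, z} \<in> E \<Longrightarrow> walk E (ps @ [z])"
  unfolding walk_def
proof (intro allI impI)
  fix i assume w: "\<forall>i. Suc i < length ps \<longrightarrow> {ps ! i, ps ! Suc i} \<in> E" and ne: "ps \<noteq> []"
    and l: "{last ps, z} \<in> E" and i: "Suc i < length (ps @ [z])"
  show "{(ps @ [z]) ! i, (ps @ [z]) ! Suc i} \<in> E"
  proof (cases "Suc i < length ps")
    case True then show ?thesis using w by (simp add: nth_append)
  next
    case False
    then have "i = length ps - 1" using i by simp
    then show ?thesis using l ne by (simp add: nth_append last_conv_nth)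
  qed
qed

lemma walk_Cons: "walk E (x # y # ps) \<longleftrightarrow> {x,y} \<in> E \<and> walk E (y # ps)"
  unfolding walk_def
proof
  assume h: "\<forall>i. Suc i < length (x # y # ps) \<longrightarrow> {(x # y # ps) ! i, (x # y # ps) ! Suc i} \<in> E"
  have "{x,y} \<in> E" using h[rule_format, of 0] by simp
  moreover have "\<forall>i. Suc i < length (y # ps) \<longrightarrow> {(y # ps) ! i, (y # ps) ! Suc i} \<in> E"
    using h by (metis Suc_less_eq length_Cons nth_Cons_Suc)
  ultimately show "{x, y} \<in> E \<and> (\<forall>i. Suc i < length (y # ps) \<longrightarrow> {(y # ps) ! i, (y # ps) ! Suc i} \<in> E)" by blast
next
  assume h: "{x, y} \<in> E \<and> (\<forall>i. Suc i < length (y # ps) \<longrightarrow> {(y # ps) ! i, (y # ps) ! Suc i} \<in> E)"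
  show "\<forall>i. Suc i < length (x # y # ps) \<longrightarrow> {(x # y # ps) ! i, (x # y # ps) ! Suc i} \<in> E"
  proof (intro allI impI)
    fix i assume "Suc i < length (x # y # ps)"
    then show "{(x # y # ps) ! i, (x # y # ps) ! Suc i} \<in> E" using h by (cases i) auto
  qed
qed

lemma walk_reach: "walk E ps \<Longrightarrow> i < length ps \<Longrightarrow> (ps!0, ps!i) \<in> (adj E)\<^sup>*"
proof (induction i)
  case 0 then show ?case by simp
next
  case (Suc i)
  then have "(ps!0, ps!i) \<in> (adj E)\<^sup>*" by simp
  moreover have "{ps!i, ps!Suc i} \<in> E" using Suc.prems unfolding walk_def by blast
  ultimately show ?case by (simp add: rtrancl_into_rtrancl)
qed

lemma distinct_walk_of_rtrancl:
  assumes "(s,t) \<in> (adj E)\<^sup>*"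
  shows "\<exists>ps. distinct ps \<and> ps \<noteq> [] \<and> hd ps = s \<and> last ps = t \<and> walk E ps"
  using assms
proof (induction rule: rtrancl_induct)
  case base
  show ?case by (rule exI[of _ "[s]"]) (simp add: walk_def)
next
  case (step y z)
  then obtain ps where ps: "distinct ps" "ps \<noteq> []" "hd ps = s" "last ps = y" "walk E ps" by blast
  show ?case
  proof (cases "z \<in> set ps")
    case True
    then obtain k where k: "k < length ps" "ps!k = z" by (metis in_set_conv_nth)
    let ?qs = "take (Suc k) ps"
    have "distinct ?qs" using ps(1) by simp
    moreover have "?qs \<noteq> []" using ps(2) by simp
    moreover have "hd ?qs = s" using ps(2,3) by (simp add: hd_take)
    moreover have "last ?qs = z" using k by (simp add: take_Suc_conv_app_nth)
    moreover have "walk E ?qs" using ps(5) by (rule walk_take)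
    ultimately show ?thesis by blast
  next
    case False
    have "distinct (ps @ [z])" using ps(1) False by simp
    moreover have "walk E (ps @ [z])" using walk_snoc[OF ps(5) ps(2)] step(2) ps(4) by simp
    ultimately show ?thesis using ps by (intro exI[of _ "ps @ [z]"]) simp
  qed
qed

lemma acyclic_no_closed_walk:
  assumes ac: "acyclic_graph G" and d: "distinct vs" and l: "length vs \<ge> 3"
    and s: "set vs \<subseteq> verts G" and w: "walk (edges G) vs" and c: "{last vs, hd vs} \<in> edges G"
  shows False
proof -
  have "\<forall>i < length vs. {vs ! i, vs ! ((i + 1) mod length vs)} \<in> edges G"
  proof (intro allI impI)
    fix i assume i: "i < length vs"
    show "{vs ! i, vs ! ((i + 1) mod length vs)} \<in> edges G"
    proof (cases "Suc i < length vs")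
      case True then show ?thesis using w unfolding walk_def by simp
    next
      case False
      then have "Suc i = length vs" using i by simp
      then have "(i + 1) mod length vs = 0" "i = length vs - 1" by auto
      moreover have "vs \<noteq> []" using l by auto
      ultimately show ?thesis using c by (simp add: last_conv_nth hd_conv_nth)
    qed
  qed
  then show False using ac d l s unfolding acyclic_graph_def by blast
qed

definition comp_rel :: "'x xgraph \<Rightarrow> (nat \<times> nat) set" where
  "comp_rel F = {(u, v). u \<in> verts F \<and> v \<in> verts F \<and> (u, v) \<in> (adjrel F)\<^sup>*}"

lemma comp_rel_in_components: "t \<in> verts F \<Longrightarrow> comp_rel F `` {t} \<in> components F"
  unfolding components_def comp_rel_def by (rule quotientI)

lemma edges_finite: "wf_graph G \<Longrightarrow> finite (edges G)"
  unfolding wf_graph_def by (meson Pow_iff finite_Pow_iff finite_subset subsetI)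

lemma xforest_wf: "is_xforest X F \<Longrightarrow> wf_graph F"
  by (simp add: is_xforest_def)

lemma xforest_lab: "is_xforest X F \<Longrightarrow> lab F ` X \<subseteq> verts F"
  by (simp add: is_xforest_def)

lemma xforest_acyclic:
  assumes F: "is_xforest X F" shows "acyclic_graph F"
  unfolding acyclic_graph_def
proof
  assume "\<exists>vs. 3 \<le> length vs \<and> distinct vs \<and> set vs \<subseteq> verts F \<and>
      (\<forall>i<length vs. {vs ! i, vs ! ((i + 1) mod length vs)} \<in> edges F)"
  then obtain vs where vs: "3 \<le> length vs" "distinct vs" "set vs \<subseteq> verts F"
      "\<forall>i<length vs. {vs ! i, vs ! ((i + 1) mod length vs)} \<in> edges F" by blast
  have wf: "wf_graph F" using F by (simp add: is_xforest_def)
  let ?t = "vs!0"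
  let ?K = "comp_rel F `` {?t}"
  have "0 < length vs" using vs(1) by linarith
  then have "?t \<in> set vs" by (rule nth_mem)
  then have t: "?t \<in> verts F" using vs(3) by blast
  have K: "?K \<in> components F" using comp_rel_in_components[OF t] .
  have w: "walk (edges F) vs" unfolding walk_def
  proof (intro allI impI)
    fix i assume i: "Suc i < length vs"
    then have "Suc i mod length vs = Suc i" by simp
    then show "{vs ! i, vs ! Suc i} \<in> edges F" using vs(4) i by (metis Suc_eq_plus1 Suc_lessD)
  qed
  have inK: "vs!i \<in> ?K" if "i < length vs" for i
  proof -
    have "(?t, vs!i) \<in> (adj (edges F))\<^sup>*" using walk_reach[OF w that] .
    moreover have "vs!i \<in> verts F" using vs(3) that by auto
    ultimately show ?thesis using t by (simp add: comp_rel_def adjrel_eq)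
  qed
  have "is_xtree {x \<in> X. lab F x \<in> ?K} (induced F ?K)" using F K unfolding is_xforest_def by blast
  then have ac: "acyclic_graph (induced F ?K)" by (simp add: is_xtree_def is_tree_def)
  have "\<forall>i<length vs. {vs ! i, vs ! ((i + 1) mod length vs)} \<in> edges (induced F ?K)"
  proof (intro allI impI)
    fix i assume i: "i < length vs"
    have "(i + 1) mod length vs < length vs" using i by (metis length_pos_if_in_set mod_less_divisor nth_mem)
    then show "{vs ! i, vs ! ((i + 1) mod length vs)} \<in> edges (induced F ?K)"
      using vs(4) i inK unfolding induced_def by simp
  qed
  moreover have "set vs \<subseteq> verts (induced F ?K)" using inK by (auto simp: induced_def in_set_conv_nth)
  ultimately show False using ac vs(1,2) unfolding acyclic_graph_def by blast
qed

lemma xforest_deg: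
  assumes F: "is_xforest X F" and t: "t \<in> verts F" and nl: "labels X F t = {}"
  shows "deg F t \<ge> 3"
proof -
  have wf: "wf_graph F" using F by (simp add: is_xforest_def)
  let ?K = "comp_rel F `` {t}"
  have K: "?K \<in> components F" using comp_rel_in_components[OF t] .
  have tK: "t \<in> ?K" using t by (simp add: comp_rel_def)
  have T: "is_xtree {x \<in> X. lab F x \<in> ?K} (induced F ?K)" using F K unfolding is_xforest_def by blast
  have "\<not> labeled {x \<in> X. lab F x \<in> ?K} (induced F ?K) t"
    using nl by (auto simp: labeled_def labels_def induced_def)
  then have "deg (induced F ?K) t \<ge> 3" using T tK by (simp add: is_xtree_def induced_def)
  moreover have "deg (induced F ?K) t \<le> deg F t"
    unfolding deg_def induced_def using edges_finite[OF wf] by (auto intro!: card_mono)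
  ultimately show ?thesis by simp
qed

lemma acyclic_no_common_nbr:
  assumes wf: "wf_graph G" and ac: "acyclic_graph G" and uv: "{u,v} \<in> edges G"
  shows "no_common_nbr G u v"
  unfolding no_common_nbr_def
proof (intro allI notI)
  fix t assume h: "{u,t} \<in> edges G \<and> {v,t} \<in> edges G"
  have d: "distinct [u,v,t]" using wf_edge2[OF wf] uv h by auto
  have w: "walk (edges G) [u,v,t]" unfolding walk_Cons using uv h by (auto simp: walk_def insert_commute)
  have s: "set [u,v,t] \<subseteq> verts G" using wf_edge2[OF wf] uv h by auto
  show False by (rule acyclic_no_closed_walk[OF ac d _ s w]) (use h in \<open>auto simp: insert_commute\<close>)
qed

lemma acyclic_no_detour:
  assumes wf: "wf_graph G" and ac: "acyclic_graph G" and uv: "{u,v} \<in> edges G"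
    and r: "(u,v) \<in> (adj (edges G - {{u,v}}))\<^sup>*"
  shows False
proof -
  have uv': "u \<noteq> v" using wf_edge2[OF wf uv] by simp
  obtain ps where ps: "distinct ps" "ps \<noteq> []" "hd ps = u" "last ps = v" "walk (edges G - {{u,v}}) ps"
    using distinct_walk_of_rtrancl[OF r] by blast
  have l2: "length ps \<ge> 2"
  proof (rule ccontr)
    assume "\<not> length ps \<ge> 2"
    moreover have "length ps > 0" using ps(2) by simp
    ultimately have "length ps = 1" by linarith
    then obtain a where "ps = [a]" by (metis One_nat_def length_0_conv length_Suc_conv)
    then have "hd ps = last ps" by simp
    then show False using ps uv' by simp
  qed
  have l3: "length ps \<ge> 3"
  proof (rule ccontr)
    assume "\<not> length ps \<ge> 3"
    then have "length ps = 2" using l2 by simp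
    then obtain a b where "ps = [a,b]" by (metis (no_types, lifting) One_nat_def Suc_1 length_0_conv length_Suc_conv)
    then have "{ps!0, ps!Suc 0} \<in> edges G - {{u,v}}" using ps(5) unfolding walk_def by simp
    moreover have "ps!0 = u" "ps!Suc 0 = v" using ps(3,4) \<open>ps = [a,b]\<close> by simp_all
    ultimately show False by simp
  qed
  have w: "walk (edges G) ps" using ps(5) unfolding walk_def by blast
  have s: "set ps \<subseteq> verts G"
  proof
    fix x assume "x \<in> set ps"
    then obtain i where i: "i < length ps" "ps!i = x" by (metis in_set_conv_nth)
    show "x \<in> verts G"
    proof (cases "Suc i < length ps")
      case True then show ?thesis using w i wf_edge2[OF wf] unfolding walk_def by blast
    next
      case False
      then have "i > 0" "Suc (i - 1) < length ps" "Suc (i-1) = i" using i l3 by auto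
      then show ?thesis using w i wf_edge2[OF wf] unfolding walk_def by metis
    qed
  qed
  show False by (rule acyclic_no_closed_walk[OF ac ps(1) l3 s w]) (use uv ps in \<open>simp add: insert_commute\<close>)
qed

section \<open>Binary phylogenetic trees\<close>

definition binary :: "'x set \<Rightarrow> 'x xgraph \<Rightarrow> bool" where
  "binary X G \<longleftrightarrow> (\<forall>t\<in>verts G. (deg G t = 1 \<and> card (labels X G t) = 1) \<or> (deg G t = 3 \<and> labels X G t = {}))"

lemma labeled_labels: "labeled X G t \<longleftrightarrow> labels X G t \<noteq> {}"
  by (auto simp: labeled_def labels_def)

lemma inCX_xtree: "in_CX X C \<Longrightarrow> is_xtree X C" by (simp add: in_CX_def)
lemma xtree_wf: "is_xtree X C \<Longrightarrow> wf_graph C" by (simp add: is_xtree_def is_tree_def)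
lemma xtree_lab: "is_xtree X C \<Longrightarrow> lab C ` X \<subseteq> verts C" by (simp add: is_xtree_def)
lemma xtree_acyclic: "is_xtree X C \<Longrightarrow> acyclic_graph C" by (simp add: is_xtree_def is_tree_def)
lemma xtree_connected: "is_xtree X C \<Longrightarrow> connected_graph C" by (simp add: is_xtree_def is_tree_def)

lemma binary_of_inCX:
  assumes C: "in_CX X C" shows "binary X C"
  unfolding binary_def
proof
  fix t assume t: "t \<in> verts C"
  have bij: "bij_betw (lab C) X (leaves C)" using C by (simp add: in_CX_def)
  show "(deg C t = 1 \<and> card (labels X C t) = 1) \<or> (deg C t = 3 \<and> labels X C t = {})"
  proof (cases "t \<in> leaves C")
    case True
    then have d: "deg C t = 1" by (simp add: leaves_def)
    obtain x0 where x0: "x0 \<in> X" "lab C x0 = t" using bij True by (metis bij_betw_imp_surj_on imageE)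
    have "labels X C t = {x0}"
    proof
      show "labels X C t \<subseteq> {x0}"
        using bij x0 unfolding labels_def bij_betw_def inj_on_def by auto
      show "{x0} \<subseteq> labels X C t" using x0 by (simp add: labels_def)
    qed
    then show ?thesis using d by simp
  next
    case False
    then have "\<not> labeled X C t \<and> deg C t = 3" using C t by (simp add: in_CX_def)
    then show ?thesis by (simp add: labeled_labels)
  qed
qed

lemma inCX_of_binary:
  assumes T: "is_xtree X G" and B: "binary X G"
  shows "in_CX X G"
proof -
  have lv: "lab G ` X \<subseteq> verts G" using T by (rule xtree_lab)
  have inj: "inj_on (lab G) X"
  proof
    fix x y assume xy: "x \<in> X" "y \<in> X" "lab G x = lab G y"
    let ?t = "lab G x"
    have t: "?t \<in> verts G" using lv xy by blast
    have "x \<in> labels X G ?t" "y \<in> labels X G ?t" using xy by (auto simp: labels_def)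
    then have "labels X G ?t \<noteq> {}" by blast
    then have "card (labels X G ?t) = 1" using B t by (auto simp: binary_def)
    then show "x = y" using \<open>x \<in> labels X G ?t\<close> \<open>y \<in> labels X G ?t\<close> by (metis card_1_singletonE singletonD)
  qed
  have img: "lab G ` X = leaves G"
  proof
    show "lab G ` X \<subseteq> leaves G"
    proof
      fix t assume "t \<in> lab G ` X"
      then obtain x where x: "x \<in> X" "t = lab G x" by blast
      then have t: "t \<in> verts G" using lv by blast
      have "labels X G t \<noteq> {}" using x by (auto simp: labels_def)
      then have "deg G t = 1" using B t by (auto simp: binary_def)
      then show "t \<in> leaves G" using t by (simp add: leaves_def)
    qed
    show "leaves G \<subseteq> lab G ` X"
    proof
      fix t assume "t \<in> leaves G"
      then have t: "t \<in> verts G" "deg G t = 1" by (auto simp: leaves_def)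
      then have "card (labels X G t) = 1" using B by (auto simp: binary_def)
      then have "labels X G t \<noteq> {}" by auto
      then show "t \<in> lab G ` X" by (auto simp: labels_def)
    qed
  qed
  have int: "\<forall>v\<in>verts G - leaves G. \<not> labeled X G v \<and> deg G v = 3"
  proof
    fix t assume "t \<in> verts G - leaves G"
    then have t: "t \<in> verts G" "deg G t \<noteq> 1" by (auto simp: leaves_def)
    then show "\<not> labeled X G t \<and> deg G t = 3" using B by (auto simp: binary_def labeled_labels)
  qed
  show ?thesis unfolding in_CX_def using T inj img int by (simp add: bij_betw_def)
qed

lemma binary_deg_le_3: "binary X G \<Longrightarrow> t \<in> verts G \<Longrightarrow> deg G t \<le> 3"
  by (auto simp: binary_def)

lemma deg_ge_1: "wf_graph G \<Longrightarrow> {u,v} \<in> edges G \<Longrightarrow> deg G u \<ge> 1"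
  using nbrs_finite[of G u] nbrs_iff[of v G u, THEN iffD2] deg_nbrs[of G u]
  by (metis One_nat_def Suc_leI card_gt_0_iff empty_iff)

lemma nbrs_of_deg_1: "wf_graph G \<Longrightarrow> {u,v} \<in> edges G \<Longrightarrow> deg G u = 1 \<Longrightarrow> nbrs G u = {v}"
  using nbrs_iff[of v G u, THEN iffD2] deg_nbrs[of G u] by (metis card_1_singletonE singletonD)

lemma leaf_leaf_edge_card_le_2:
  assumes C: "in_CX X C" and uv: "{u,v} \<in> edges C" and du: "deg C u = 1" and dv: "deg C v = 1"
  shows "card X \<le> 2"
proof -
  have T: "is_xtree X C" using C by (rule inCX_xtree)
  have wf: "wf_graph C" using T by (rule xtree_wf)
  have nu: "nbrs C u = {v}" using nbrs_of_deg_1[OF wf uv du] .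
  have nv: "nbrs C v = {u}" using nbrs_of_deg_1[OF wf _ dv, of u] uv by (simp add: insert_commute)
  have u: "u \<in> verts C" using wf_edge2[OF wf uv] by simp
  have reach: "t \<in> {u,v}" if "(u,t) \<in> (adj (edges C))\<^sup>*" for t
    using that
  proof (induction rule: rtrancl_induct)
    case base then show ?case by simp
  next
    case (step y z)
    then have "z \<in> nbrs C y" by (simp add: nbrs_iff)
    then show ?case using step(3) nu nv by auto
  qed
  have "verts C \<subseteq> {u,v}"
  proof
    fix t assume "t \<in> verts C"
    then have "(u,t) \<in> (adj (edges C))\<^sup>*"
      using xtree_connected[OF T] u by (simp add: connected_graph_def adjrel_eq)
    then show "t \<in> {u,v}" using reach by blast
  qed
  then have "leaves C \<subseteq> {u,v}" by (auto simp: leaves_def)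
  then have "card (leaves C) \<le> card {u,v}" by (intro card_mono) auto
  moreover have "card {u,v} \<le> 2" by (cases "u = v") auto
  ultimately have "card (leaves C) \<le> 2" by linarith
  moreover have "card X = card (leaves C)" using C unfolding in_CX_def by (metis bij_betw_same_card)
  ultimately show ?thesis by simp
qed

lemma inCX_one_step_contract:
  assumes C: "in_CX X C" and X3: "card X \<ge> 3" and st: "one_step X C G"
  shows "\<exists>a b. a \<noteq> b \<and> {a,b} \<in> edges C \<and> G = contract C a b"
proof -
  obtain a b where ab: "a \<noteq> b" "{a,b} \<in> edges C" "G = contract C a b \<or> (safe_deletion X C a b \<and> G = delete C a b)"
    using st by (auto simp: one_step_def)
  have wf: "wf_graph C" using C inCX_xtree xtree_wf by blast
  have B: "binary X C" using C by (rule binary_of_inCX)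
  have av: "a \<in> verts C" "b \<in> verts C" using wf_edge2[OF wf ab(2)] by auto
  have "\<not> safe_deletion X C a b"
  proof
    assume s: "safe_deletion X C a b"
    have "deg C a \<le> 3" "deg C b \<le> 3" using binary_deg_le_3[OF B] av by auto
    then have "labels X C a \<noteq> {}" "labels X C b \<noteq> {}" using s by (auto simp: safe_deletion_def labeled_labels)
    then have "deg C a = 1" "deg C b = 1" using B av by (auto simp: binary_def)
    then have "card X \<le> 2" using leaf_leaf_edge_card_le_2[OF C ab(2)] by simp
    then show False using X3 by simp
  qed
  then show ?thesis using ab by blast
qed

lemma contract_lab_in_verts:
  "lab G ` X \<subseteq> verts G \<Longrightarrow> u \<in> verts G \<Longrightarrow> u \<noteq> v \<Longrightarrow> lab (contract G u v) ` X \<subseteq> verts (contract G u v)"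
  by (auto simp: contract_simps)

lemma labels_disj: "u \<noteq> v \<Longrightarrow> labels X G u \<inter> labels X G v = {}"
  by (auto simp: labels_def)

lemma labels_finite: "finite X \<Longrightarrow> finite (labels X G t)"
  by (simp add: labels_def)

section \<open>Undoing a contraction\<close>

text \<open>Only the contracted vertex of a contracted binary tree has degree and labels that
  violate the binary pattern, so an isomorphism of contractions matches the contracted vertices.\<close>
lemma isom_contract_centre:
  assumes B: "binary X C" and wC: "wf_graph C" and lC: "lab C ` X \<subseteq> verts C"
    and ab: "{a,b} \<in> edges C" and ncC: "no_common_nbr C a b"
    and F: "is_xforest X F" and uv: "{u,v} \<in> edges F" and ncF: "no_common_nbr F u v"
    and iso: "isom X (contract C a b) (contract F u v) \<psi>" and fin: "finite X"
  shows "\<psi> a = u"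
proof (rule ccontr)
  assume ne: "\<psi> a \<noteq> u"
  have wF: "wf_graph F" using F by (rule xforest_wf)
  have wC': "wf_graph (contract C a b)" using wf_contract[OF wC ab] .
  have wF': "wf_graph (contract F u v)" using wf_contract[OF wF uv] .
  have ab': "a \<noteq> b" "a \<in> verts C" "b \<in> verts C" using wf_edge2[OF wC ab] by auto
  have uv': "u \<noteq> v" "u \<in> verts F" "v \<in> verts F" using wf_edge2[OF wF uv] by auto
  have lC': "lab (contract C a b) ` X \<subseteq> verts (contract C a b)"
    using contract_lab_in_verts[OF lC ab'(2,1)] .
  have "u \<in> verts (contract F u v)" using uv' by (simp add: contract_simps)
  then obtain q where q: "q \<in> verts (contract C a b)" "\<psi> q = u" using isom_surj[OF iso] by (metis imageE)
  have qa: "q \<noteq> a" using q ne by auto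
  have qC: "q \<in> verts C" "q \<noteq> b" using q by (auto simp: contract_simps)
  have dq: "deg (contract C a b) q = deg C q" using contract_deg_other[OF wC ab _ ncC] qa qC by simp
  have lq: "labels X (contract C a b) q = labels X C q" using contract_labels_other qa qC by metis
  have d1: "deg (contract F u v) u = deg C q" using isom_deg[OF iso wC' wF' q(1)] q(2) dq by simp
  have l1: "labels X (contract F u v) u = labels X C q" using isom_labels[OF iso lC' q(1)] q(2) lq by simp
  have ds: "deg (contract F u v) u + 2 = deg F u + deg F v" using contract_deg_centre[OF wF uv ncF] .
  have ls: "labels X (contract F u v) u = labels X F u \<union> labels X F v" by (rule contract_labels_centre)
  have du: "deg F u \<ge> 1" using deg_ge_1[OF wF uv] .
  have dv: "deg F v \<ge> 1" using deg_ge_1[OF wF, of v u] uv by (simp add: insert_commute)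
  from B qC(1) consider "deg C q = 1" "card (labels X C q) = 1" | "deg C q = 3" "labels X C q = {}"
    unfolding binary_def by blast
  then show False
  proof cases
    case 1
    have "deg F u \<le> 2" "deg F v \<le> 2" using ds d1 1 dv du by linarith+
    then have "labels X F u \<noteq> {}" "labels X F v \<noteq> {}" using xforest_deg[OF F] uv' by force+
    then have "card (labels X F u) \<ge> 1" "card (labels X F v) \<ge> 1"
      using labels_finite[OF fin] by (simp_all add: Suc_leI card_gt_0_iff)
    moreover have "card (labels X F u \<union> labels X F v) = card (labels X F u) + card (labels X F v)"
      by (rule card_Un_disjoint) (use labels_finite[OF fin] labels_disj[OF uv'(1), of X F] in auto)
    ultimately show False using 1 l1 ls by simp
  next
    case 2
    then have "labels X F u = {}" "labels X F v = {}" using l1 ls by auto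
    then have "deg F u \<ge> 3" "deg F v \<ge> 3" using xforest_deg[OF F] uv' by auto
    then show False using ds d1 2 by linarith
  qed
qed

locale uncontraction =
  fixes X :: "'x set" and H G :: "'x xgraph" and a b u v :: nat and \<psi> :: "nat \<Rightarrow> nat"
  assumes wH: "wf_graph H" and wG: "wf_graph G"
    and ab: "{a,b} \<in> edges H" and uv: "{u,v} \<in> edges G"
    and ncH: "no_common_nbr H a b" and ncG: "no_common_nbr G u v"
    and iso: "isom X (contract H a b) (contract G u v) \<psi>" and \<psi>a: "\<psi> a = u"
    and nbrs_a: "\<psi> ` (nbrs H a - {b}) = nbrs G u - {v}"
    and labels_a: "labels X H a = labels X G u"
    and lH: "lab H ` X \<subseteq> verts H"
begin

lemma lab_a: "x \<in> X \<Longrightarrow> lab H x = a \<longleftrightarrow> lab G x = u"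
  using labels_a unfolding labels_def by blast

definition ext :: "nat \<Rightarrow> nat" where
  "ext t = (if t = b then v else \<psi> t)"

lemma ab_verts: "a \<noteq> b" "a \<in> verts H" "b \<in> verts H" and uv_verts: "u \<noteq> v" "u \<in> verts G" "v \<in> verts G"
  using wf_edge2[OF wH ab] wf_edge2[OF wG uv] by auto

lemma bij_\<psi>: "bij_betw \<psi> (verts H - {b}) (verts G - {v})"
  using iso by (simp add: isom_def contract_simps)

lemma \<psi>_in: "y \<in> verts H - {b} \<Longrightarrow> \<psi> y \<in> verts G - {v}"
  using bij_\<psi> bij_betwE by blast

lemma \<psi>_ne_u: "y \<in> verts H - {a,b} \<Longrightarrow> \<psi> y \<noteq> u"
  using bij_betw_imp_inj_on[OF bij_\<psi>] ab_verts \<psi>a by (auto dest: inj_onD)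

lemma \<psi>_away: "y \<in> verts H - {a,b} \<Longrightarrow> \<psi> y \<notin> {u,v}"
  using \<psi>_in \<psi>_ne_u by blast

lemma edge_contract_iff:
  "x \<in> verts H - {b} \<Longrightarrow> y \<in> verts H - {b} \<Longrightarrow>
    {x,y} \<in> edges (contract H a b) \<longleftrightarrow> {\<psi> x, \<psi> y} \<in> edges (contract G u v)"
  using isom_edge[OF iso] by (simp add: contract_simps)

lemma edge_at_a: "y \<in> verts H - {a,b} \<Longrightarrow> {a,y} \<in> edges H \<longleftrightarrow> {u, \<psi> y} \<in> edges G"
proof -
  assume y: "y \<in> verts H - {a,b}"
  have sub: "nbrs H a - {b} \<subseteq> verts H - {b}" using nbrs_verts[OF wH] by blast
  have "{a,y} \<in> edges H \<longleftrightarrow> y \<in> nbrs H a - {b}" using y by (simp add: nbrs_iff)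
  also have "\<dots> \<longleftrightarrow> \<psi> y \<in> \<psi> ` (nbrs H a - {b})"
    using inj_on_image_mem_iff[OF bij_betw_imp_inj_on[OF bij_\<psi>] _ sub] y by simp
  also have "\<dots> \<longleftrightarrow> {u, \<psi> y} \<in> edges G" using nbrs_a \<psi>_in[of y] y by (simp add: nbrs_iff)
  finally show ?thesis .
qed

lemma edge_at_b: "y \<in> verts H - {a,b} \<Longrightarrow> {b,y} \<in> edges H \<longleftrightarrow> {v, \<psi> y} \<in> edges G"
proof -
  assume y: "y \<in> verts H - {a,b}"
  have "{a,y} \<in> edges (contract H a b) \<longleftrightarrow> {u, \<psi> y} \<in> edges (contract G u v)"
    using edge_contract_iff[of a y] y ab_verts \<psi>a by simp
  then have "({a,y} \<in> edges H \<or> {b,y} \<in> edges H) \<longleftrightarrow> ({u, \<psi> y} \<in> edges G \<or> {v, \<psi> y} \<in> edges G)"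
    using contract_edge_at_centre[OF wH] contract_edge_at_centre[OF wG \<psi>_away[OF y]] y by simp
  moreover have "\<not> ({a,y} \<in> edges H \<and> {b,y} \<in> edges H)" "\<not> ({u,\<psi> y} \<in> edges G \<and> {v,\<psi> y} \<in> edges G)"
    using ncH ncG by (simp_all add: no_common_nbr_def)
  ultimately show ?thesis using edge_at_a[OF y] by blast
qed

lemma edge_away:
  "x \<in> verts H - {a,b} \<Longrightarrow> y \<in> verts H - {a,b} \<Longrightarrow> {x,y} \<in> edges H \<longleftrightarrow> {\<psi> x, \<psi> y} \<in> edges G"
  using contract_edge_away[OF wH, of x a b y] edge_contract_iff[of x y]
    contract_edge_away[OF wG \<psi>_away \<psi>_away] by simp

lemma ext_a: "ext a = u" and ext_b: "ext b = v" and ext_other: "t \<noteq> b \<Longrightarrow> ext t = \<psi> t"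
  using ab_verts \<psi>a by (simp_all add: ext_def)

lemma bij_ext: "bij_betw ext (verts H) (verts G)"
proof -
  have "bij_betw ext (verts H - {b}) (verts G - {v})"
    using bij_\<psi> by (rule bij_betw_cong[THEN iffD1, rotated]) (simp add: ext_other)
  then have "bij_betw ext (verts H - {b} \<union> {b}) (verts G - {v} \<union> {ext b})"
    using notIn_Un_bij_betw3[of b "verts H - {b}" ext "verts G - {v}"] ext_b by simp
  then show ?thesis using ab_verts uv_verts ext_b by (simp add: insert_absorb)
qed

lemma edge_ext_at_a: "y \<in> verts H \<Longrightarrow> {a,y} \<in> edges H \<longleftrightarrow> {u, ext y} \<in> edges G"
  using edge_at_a wf_edge2[OF wH, of a a] wf_edge2[OF wG, of u u] ab uv ab_verts
  by (cases "y = a \<or> y = b") (auto simp: ext_def \<psi>a)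

lemma edge_ext_at_b: "y \<in> verts H \<Longrightarrow> {b,y} \<in> edges H \<longleftrightarrow> {v, ext y} \<in> edges G"
proof -
  have "{b,a} \<in> edges H" "{v,u} \<in> edges G" using ab uv by (simp_all add: insert_commute)
  then show "y \<in> verts H \<Longrightarrow> ?thesis"
    using edge_at_b wf_edge2[OF wH, of b b] wf_edge2[OF wG, of v v] ab_verts
    by (cases "y = a \<or> y = b") (auto simp: ext_def \<psi>a)
qed

lemma edges_ext: "x \<in> verts H \<Longrightarrow> y \<in> verts H \<Longrightarrow> {x,y} \<in> edges H \<longleftrightarrow> {ext x, ext y} \<in> edges G"
  using edge_ext_at_a[of y] edge_ext_at_b[of y] edge_ext_at_a[of x] edge_ext_at_b[of x] edge_away[of x y]
  by (cases "x \<in> {a,b}"; cases "y \<in> {a,b}") (auto simp: ext_a ext_b ext_other insert_commute)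

lemma lab_ext: "x \<in> X \<Longrightarrow> lab G x = ext (lab H x)"
proof -
  assume x: "x \<in> X"
  have t: "lab H x \<in> verts H" using lH x by blast
  have lG: "lab (contract G u v) x = \<psi> (lab (contract H a b) x)" using isom_lab[OF iso x] .
  consider "lab H x = a" | "lab H x = b" | "lab H x \<in> verts H - {a,b}" using t by blast
  then show ?thesis
  proof cases
    case 1 then show ?thesis using lab_a[OF x] ext_a by simp
  next
    case 2
    then have "lab G x = u \<or> lab G x = v" using lG \<psi>a by (auto simp: contract_simps split: if_splits)
    then show ?thesis using lab_a[OF x] 2 ab_verts(1) ext_b by auto
  next
    case 3
    then have "lab G x = \<psi> (lab H x)" using lG \<psi>_away[OF 3] by (auto simp: contract_simps split: if_splits)
    then show ?thesis using 3 ext_other by auto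
  qed
qed

lemma isom_ext: "isom X H G ext"
  unfolding isom_def using bij_ext edges_ext lab_ext by blast

end

section \<open>Covers of a contraction\<close>

lemma delete_simps: "verts (delete G u v) = verts G" "edges (delete G u v) = edges G - {{u,v}}"
  "lab (delete G u v) = lab G"
  by (simp_all add: delete_def)

lemma cover_one_step_contract:
  assumes F: "is_xforest X F" and st: "one_step X F G" and iso: "xiso X w G"
    and w: "is_xforest X w" and cw: "connected_graph w"
  shows "\<exists>u v. u \<noteq> v \<and> {u,v} \<in> edges F \<and> G = contract F u v"
proof -
  obtain u v where uv: "u \<noteq> v" "{u,v} \<in> edges F" "G = contract F u v \<or> (safe_deletion X F u v \<and> G = delete F u v)"
    using st by (auto simp: one_step_def)
  have wF: "wf_graph F" using F by (rule xforest_wf)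
  have "G \<noteq> delete F u v"
  proof
    assume G: "G = delete F u v"
    obtain f where f: "isom X w G f" using iso xiso_isom by blast
    have cG: "connected_graph G" using isom_connected[OF f xforest_wf[OF w] cw] .
    have "u \<in> verts G" "v \<in> verts G" using wf_edge2[OF wF uv(2)] G by (auto simp: delete_simps)
    then have "(u,v) \<in> (adj (edges F - {{u,v}}))\<^sup>*" using cG G
      by (simp add: connected_graph_def adjrel_eq delete_simps)
    then show False using acyclic_no_detour[OF wF xforest_acyclic[OF F] uv(2)] by blast
  qed
  then show ?thesis using uv by blast
qed

lemma connected_of_xiso_contract:
  assumes T: "is_xtree X C" and ab: "{a,b} \<in> edges C" and iso: "xiso X w (contract C a b)"
    and w: "is_xforest X w"
  shows "connected_graph w"
proof -
  have wC: "wf_graph C" using T by (rule xtree_wf)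
  have ab': "a \<noteq> b" "a \<in> verts C" using wf_edge2[OF wC ab] by auto
  have c: "connected_graph (contract C a b)" using contract_connected[OF wC ab xtree_connected[OF T]] .
  have "xiso X (contract C a b) w" using xiso_sym[OF xforest_lab[OF w] iso] .
  then obtain f where "isom X (contract C a b) w f" using xiso_isom by blast
  then show ?thesis using isom_connected wf_contract[OF wC ab] c by blast
qed

lemma xiso_uncontract:
  assumes wH: "wf_graph H" and wG: "wf_graph G"
    and ab: "{a,b} \<in> edges H" and uv: "{u,v} \<in> edges G"
    and ncH: "no_common_nbr H a b" and ncG: "no_common_nbr G u v"
    and iso: "isom X (contract H a b) (contract G u v) \<psi>" and \<psi>a: "\<psi> a = u"
    and lH: "lab H ` X \<subseteq> verts H"
    and M: "(\<psi> ` (nbrs H a - {b}) = nbrs G u - {v} \<and> labels X H a = labels X G u) \<or>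
            (\<psi> ` (nbrs H a - {b}) = nbrs G v - {u} \<and> labels X H a = labels X G v)"
  shows "xiso X H G"
  using M
proof
  assume m: "\<psi> ` (nbrs H a - {b}) = nbrs G u - {v} \<and> labels X H a = labels X G u"
  have "uncontraction X H G a b u v \<psi>"
    using wH wG ab uv ncH ncG iso \<psi>a m lH by (simp add: uncontraction_def)
  then show ?thesis using uncontraction.isom_ext xiso_isom by blast
next
  assume m: "\<psi> ` (nbrs H a - {b}) = nbrs G v - {u} \<and> labels X H a = labels X G v"
  let ?s = "\<lambda>x. if x = u then v else (x::nat)"
  have iso': "isom X (contract H a b) (contract G v u) (?s \<circ> \<psi>)"
    using isom_trans[OF iso isom_contract_swap[OF wG uv]] .
  have "{v,u} \<in> edges G" "no_common_nbr G v u" "(?s \<circ> \<psi>) a = v"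
    using uv ncG no_common_nbr_sym \<psi>a by (auto simp: insert_commute)
  moreover have "(?s \<circ> \<psi>) ` (nbrs H a - {b}) = nbrs G v - {u}"
    using m by (auto simp: image_comp[symmetric] image_iff)
  ultimately have "uncontraction X H G a b v u (?s \<circ> \<psi>)"
    using wH wG ab ncH iso' m lH by (simp add: uncontraction_def)
  then show ?thesis using uncontraction.isom_ext xiso_isom by blast
qed

locale binary_edge =
  fixes X :: "'x set" and C :: "'x xgraph" and a b :: nat
  assumes C: "in_CX X C" and fin: "finite X" and edge_ab: "{a,b} \<in> edges C"
begin

lemma wf_C: "wf_graph C" and lab_C: "lab C ` X \<subseteq> verts C" and acyclic_C: "acyclic_graph C"
  and binary_C: "binary X C"
  using C inCX_xtree xtree_wf xtree_lab xtree_acyclic binary_of_inCX by blast+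

lemma edge_ba: "{b,a} \<in> edges C"
  using edge_ab by (simp add: insert_commute)

lemma a_ne_b: "a \<noteq> b" and a_in_C: "a \<in> verts C" and b_in_C: "b \<in> verts C"
  using wf_edge2[OF wf_C edge_ab] by auto

lemma a_in_contract: "a \<in> verts (contract C a b)"
  using a_in_C a_ne_b by (simp add: contract_simps)

lemma no_common_ab: "no_common_nbr C a b"
  using acyclic_no_common_nbr[OF wf_C acyclic_C edge_ab] .

end

locale contraction_cover = binary_edge +
  fixes F and u v :: nat and \<psi> :: "nat \<Rightarrow> nat"
  assumes F: "is_xforest X F" and edge_uv: "{u,v} \<in> edges F"
    and \<psi>: "isom X (contract C a b) (contract F u v) \<psi>"
begin

lemma wf_F: "wf_graph F"
  using F by (rule xforest_wf)

lemma u_ne_v: "u \<noteq> v" and u_in_F: "u \<in> verts F" and v_in_F: "v \<in> verts F"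
  using wf_edge2[OF wf_F edge_uv] by auto

lemma no_common_uv: "no_common_nbr F u v"
  using acyclic_no_common_nbr[OF wf_F xforest_acyclic[OF F] edge_uv] .

lemma \<psi>_a: "\<psi> a = u"
  using isom_contract_centre[OF binary_C wf_C lab_C edge_ab no_common_ab F edge_uv no_common_uv \<psi> fin] .

lemma deg_sum: "deg F u + deg F v = deg C a + deg C b"
proof -
  have "deg (contract F u v) u = deg (contract C a b) a"
    using isom_deg[OF \<psi> wf_contract[OF wf_C edge_ab] wf_contract[OF wf_F edge_uv] a_in_contract] \<psi>_a
    by simp
  then show ?thesis
    using contract_deg_centre[OF wf_C edge_ab no_common_ab] contract_deg_centre[OF wf_F edge_uv no_common_uv]
    by simp
qed

lemma labels_union: "labels X F u \<union> labels X F v = labels X C a \<union> labels X C b"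
  using isom_labels[OF \<psi> contract_lab_in_verts[OF lab_C a_in_C a_ne_b] a_in_contract] \<psi>_a
  by (simp add: contract_labels_centre)

lemma \<psi>_nbrs: "\<psi> ` ((nbrs C a - {b}) \<union> (nbrs C b - {a})) = (nbrs F u - {v}) \<union> (nbrs F v - {u})"
  using isom_nbrs[OF \<psi> wf_contract[OF wf_C edge_ab] wf_contract[OF wf_F edge_uv] a_in_contract] \<psi>_a
    contract_nbrs_centre_Un[OF wf_C edge_ab] contract_nbrs_centre_Un[OF wf_F edge_uv] by simp

lemma xiso_of_uncontraction:
  assumes H: "wf_graph H" "{a,b} \<in> edges H" "no_common_nbr H a b" "contract H a b = contract C a b"
    "lab H ` X \<subseteq> verts H"
    and M: "(\<psi> ` (nbrs H a - {b}) = nbrs F u - {v} \<and> labels X H a = labels X F u) \<or>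
      (\<psi> ` (nbrs H a - {b}) = nbrs F v - {u} \<and> labels X H a = labels X F v)"
  shows "xiso X H F"
proof -
  have iso: "isom X (contract H a b) (contract F u v) \<psi>" using \<psi> H(4) by simp
  show ?thesis by (rule xiso_uncontract[OF H(1) wf_F H(2) edge_uv H(3) no_common_uv iso \<psi>_a H(5) M])
qed

context
  assumes leaf: "leaf_edge C a b" and X3: "card X \<ge> 3"
begin

lemma leaf_edge_endpoints:
  "(deg C a = 1 \<and> card (labels X C a) = 1 \<and> deg C b = 3 \<and> labels X C b = {}) \<or>
   (deg C b = 1 \<and> card (labels X C b) = 1 \<and> deg C a = 3 \<and> labels X C a = {})"
proof -
  have "\<not> (deg C a = 1 \<and> deg C b = 1)" using leaf_leaf_edge_card_le_2[OF C edge_ab] X3 by auto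
  moreover have "deg C a = 1 \<or> deg C b = 1" using leaf by (auto simp: leaf_edge_def leaves_def)
  ultimately show ?thesis using binary_C a_in_C b_in_C unfolding binary_def by fastforce
qed

lemma cover_edge_endpoints:
  "(deg F u = 1 \<and> labels X F v = {} \<and> deg F v = 3) \<or> (deg F v = 1 \<and> labels X F u = {} \<and> deg F u = 3)"
proof -
  have sum: "deg F u + deg F v = 4" using deg_sum leaf_edge_endpoints by auto
  have "card (labels X F u \<union> labels X F v) = 1" using labels_union leaf_edge_endpoints by auto
  moreover have "card (labels X F u \<union> labels X F v) = card (labels X F u) + card (labels X F v)"
    by (rule card_Un_disjoint) (use labels_finite[OF fin] labels_disj[OF u_ne_v, of X F] in auto)
  ultimately have "card (labels X F u) = 0 \<or> card (labels X F v) = 0" by arith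
  then have "labels X F u = {} \<or> labels X F v = {}" using labels_finite[OF fin] by simp
  moreover have "deg F u \<ge> 1" "deg F v \<ge> 1"
    using deg_ge_1[OF wf_F edge_uv] deg_ge_1[OF wf_F, of v u] edge_uv by (auto simp: insert_commute)
  ultimately show ?thesis using sum xforest_deg[OF F u_in_F] xforest_deg[OF F v_in_F] by fastforce
qed

lemma leaf_nbrs_labels_match:
  "(\<psi> ` (nbrs C a - {b}) = nbrs F u - {v} \<and> labels X C a = labels X F u) \<or>
   (\<psi> ` (nbrs C a - {b}) = nbrs F v - {u} \<and> labels X C a = labels X F v)"
proof -
  have leaf_nbrs: "nbrs G p - {q} = {}" if "deg G p = 1" "{p,q} \<in> edges G" "wf_graph G" for G p q
    using nbrs_of_deg_1[OF that(3,2,1)] by simp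
  note endpoints = leaf_edge_endpoints cover_edge_endpoints
  have C_nbrs: "deg C a = 1 \<Longrightarrow> nbrs C a - {b} = {}" "deg C b = 1 \<Longrightarrow> nbrs C b - {a} = {}"
    using leaf_nbrs[OF _ edge_ab wf_C] leaf_nbrs[OF _ edge_ba wf_C] by blast+
  have F_nbrs: "deg F u = 1 \<Longrightarrow> nbrs F u - {v} = {}" "deg F v = 1 \<Longrightarrow> nbrs F v - {u} = {}"
    using leaf_nbrs[OF _ edge_uv wf_F] leaf_nbrs[OF _ _ wf_F, of v u] edge_uv
    by (auto simp: insert_commute)
  have L: "labels X C a \<union> labels X C b = labels X F u \<union> labels X F v" using labels_union by simp
  from endpoints(1) show ?thesis
  proof (elim disjE conjE)
    assume C: "deg C a = 1" "card (labels X C a) = 1" "deg C b = 3" "labels X C b = {}"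
    have N: "\<psi> ` (nbrs C a - {b}) = {}" by (simp only: C_nbrs(1)[OF C(1)] image_empty)
    from endpoints(2) show ?thesis
    proof (elim disjE conjE)
      assume F: "deg F u = 1" "labels X F v = {}" "deg F v = 3"
      have "labels X C a = labels X F u" using L by (simp only: C(4) F(2) Un_empty_right)
      then show ?thesis using N F_nbrs(1)[OF F(1)] by metis
    next
      assume F: "deg F v = 1" "labels X F u = {}" "deg F u = 3"
      have "labels X C a = labels X F v" using L by (simp only: C(4) F(2) Un_empty_right Un_empty_left)
      then show ?thesis using N F_nbrs(2)[OF F(1)] by metis
    qed
  next
    assume C: "deg C b = 1" "card (labels X C b) = 1" "deg C a = 3" "labels X C a = {}"
    have N: "\<psi> ` (nbrs C a - {b}) = (nbrs F u - {v}) \<union> (nbrs F v - {u})"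
      using \<psi>_nbrs by (simp only: C_nbrs(2)[OF C(1)] Un_empty_right)
    from endpoints(2) show ?thesis
    proof (elim disjE conjE)
      assume F: "deg F u = 1" "labels X F v = {}" "deg F v = 3"
      then show ?thesis using C(4) N by (simp only: F_nbrs(1)[OF F(1)] Un_empty_left) simp
    next
      assume F: "deg F v = 1" "labels X F u = {}" "deg F u = 3"
      then show ?thesis using C(4) N by (simp only: F_nbrs(2)[OF F(1)] Un_empty_right) simp
    qed
  qed
qed

lemma xiso_leaf_cover: "xiso X C F"
  using xiso_of_uncontraction[OF wf_C edge_ab no_common_ab refl lab_C leaf_nbrs_labels_match] .

end

end

lemma cover_contraction_isom:
  assumes T: "is_xtree X C" and ab: "{a,b} \<in> edges C" and iso: "xiso X w (contract C a b)"
    and w: "is_xforest X w" and cov: "covers X w F"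
  obtains u v \<psi> where "{u,v} \<in> edges F" "xiso X w (contract F u v)"
    "isom X (contract C a b) (contract F u v) \<psi>"
proof -
  have F: "is_xforest X F" using cov by (simp add: covers_def)
  obtain G where G: "one_step X F G" "xiso X w G" using cov by (auto simp: covers_def)
  have "connected_graph w" using connected_of_xiso_contract[OF T ab iso w] .
  then obtain u v where uv: "{u,v} \<in> edges F" "G = contract F u v"
    using cover_one_step_contract[OF F G w] by blast
  have "xiso X (contract C a b) (contract F u v)"
    using xiso_sym[OF xforest_lab[OF w] iso] G(2) uv(2) xiso_trans by blast
  then obtain \<psi> where "isom X (contract C a b) (contract F u v) \<psi>" using xiso_isom by blast
  then show ?thesis using that uv G(2) by blast
qed

lemma leaf_edge_unique_cover:
  assumes C: "in_CX X C" and fin: "finite X" and X3: "card X \<ge> 3" and leaf: "leaf_edge C a b"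
    and iso: "xiso X w (contract C a b)" and w: "is_xforest X w" and cov: "covers X w F"
  shows "xiso X F C"
proof -
  have ab: "{a,b} \<in> edges C" using leaf by (simp add: leaf_edge_def)
  obtain u v \<psi> where uv: "{u,v} \<in> edges F" and \<psi>: "isom X (contract C a b) (contract F u v) \<psi>"
    using cover_contraction_isom[OF inCX_xtree[OF C] ab iso w cov] by blast
  interpret contraction_cover X C a b F u v \<psi>
    using C fin ab cov uv \<psi> by unfold_locales (simp_all add: covers_def)
  show ?thesis using xiso_sym[OF lab_C xiso_leaf_cover[OF leaf X3]] .
qed

section \<open>Nearest neighbour interchange\<close>

definition side :: "'x xgraph \<Rightarrow> nat \<Rightarrow> nat \<Rightarrow> nat set" where
  "side G p q = {t. (p,t) \<in> (adj (edges G - {{p,q}}))\<^sup>*}"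

lemma side_closed:
  assumes e: "{r,s} \<in> edges G" "{r,s} \<noteq> {p,q}"
  shows "r \<in> side G p q \<longleftrightarrow> s \<in> side G p q"
proof -
  have "(r,s) \<in> adj (edges G - {{p,q}})" "(s,r) \<in> adj (edges G - {{p,q}})"
    using e by (auto simp: insert_commute)
  then show ?thesis unfolding side_def mem_Collect_eq
  proof -
    assume h: "(r,s) \<in> adj (edges G - {{p,q}})" "(s,r) \<in> adj (edges G - {{p,q}})"
    show "(p, r) \<in> (adj (edges G - {{p, q}}))\<^sup>* \<longleftrightarrow> (p, s) \<in> (adj (edges G - {{p, q}}))\<^sup>*"
    proof
      assume "(p, r) \<in> (adj (edges G - {{p, q}}))\<^sup>*"
      then show "(p, s) \<in> (adj (edges G - {{p, q}}))\<^sup>*" using h(1) by (rule rtrancl_into_rtrancl)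
    next
      assume "(p, s) \<in> (adj (edges G - {{p, q}}))\<^sup>*"
      then show "(p, r) \<in> (adj (edges G - {{p, q}}))\<^sup>*" using h(2) by (rule rtrancl_into_rtrancl)
    qed
  qed
qed

lemma in_side: "p \<in> side G p q" by (simp add: side_def)

lemma not_in_side:
  assumes wf: "wf_graph G" and ac: "acyclic_graph G" and pq: "{p,q} \<in> edges G"
  shows "q \<notin> side G p q"
  unfolding side_def using acyclic_no_detour[OF wf ac pq] by blast

definition separating :: "nat set set \<Rightarrow> nat set \<Rightarrow> nat \<Rightarrow> nat \<Rightarrow> bool" where
  "separating E S p q \<longleftrightarrow>
     (p \<in> S \<longleftrightarrow> q \<notin> S) \<and> (\<forall>r s. {r,s} \<in> E \<longrightarrow> {r,s} \<noteq> {p,q} \<longrightarrow> (r \<in> S \<longleftrightarrow> s \<in> S))"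

lemma separating_sym: "separating E S p q \<Longrightarrow> separating E S q p"
  unfolding separating_def by (metis insert_commute)

lemma separating_walk:
  assumes S: "separating E S p q" and w: "walk E vs"
    and avoid: "\<And>i. Suc i < length vs \<Longrightarrow> {vs!i, vs!Suc i} \<noteq> {p,q}" and i: "i < length vs"
  shows "vs!i \<in> S \<longleftrightarrow> vs!0 \<in> S"
  using i
proof (induction i)
  case (Suc i)
  have "{vs!i, vs!Suc i} \<in> E" "{vs!i, vs!Suc i} \<noteq> {p,q}"
    using w avoid Suc.prems unfolding walk_def by blast+
  then have "vs!i \<in> S \<longleftrightarrow> vs!Suc i \<in> S" using S unfolding separating_def by blast
  then show ?case using Suc by simp
qed simp

text \<open>A cycle crosses every vertex set an even number of times, so it cannot contain an
  edge that is the only edge leaving some set.\<close>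
lemma acyclic_of_sides:
  assumes wf: "wf_graph G"
    and S: "\<And>p q. {p,q} \<in> edges G \<Longrightarrow> \<exists>S. separating (edges G) S p q"
  shows "acyclic_graph G"
  unfolding acyclic_graph_def
proof
  assume "\<exists>vs. 3 \<le> length vs \<and> distinct vs \<and> set vs \<subseteq> verts G \<and>
      (\<forall>i<length vs. {vs ! i, vs ! ((i + 1) mod length vs)} \<in> edges G)"
  then obtain vs where vs: "3 \<le> length vs" "distinct vs"
      "\<forall>i<length vs. {vs ! i, vs ! ((i + 1) mod length vs)} \<in> edges G" by blast
  let ?n = "length vs"
  have e: "{vs!i, vs!Suc i} \<in> edges G" if "Suc i < ?n" for i
    using vs(3) that by (metis Suc_eq_plus1 Suc_lessD mod_less)
  have el: "{vs!(?n - 1), vs!0} \<in> edges G"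
  proof -
    have "?n - 1 + 1 = ?n" using vs(1) by simp
    then have "?n - 1 < ?n" "(?n - 1 + 1) mod ?n = 0" by simp_all
    then show ?thesis using vs(3) by metis
  qed
  have e01: "{vs!0, vs!1} \<in> edges G" using e[of 0] vs(1) by simp
  from S[OF e01] obtain S where S: "separating (edges G) S (vs!0) (vs!1)" by blast
  then have S1: "vs!0 \<in> S \<longleftrightarrow> vs!1 \<notin> S"
    and S2: "\<forall>r s. {r,s} \<in> edges G \<longrightarrow> {r,s} \<noteq> {vs!0, vs!1} \<longrightarrow> (r \<in> S \<longleftrightarrow> s \<in> S)"
    unfolding separating_def by blast+
  have neq: "{vs!i, vs!j} \<noteq> {vs!0, vs!1}" if "i < ?n" "j < ?n" "i \<noteq> 0" "i \<noteq> 1" for i j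
  proof
    assume "{vs!i, vs!j} = {vs!0, vs!1}"
    then have "vs!i = vs!0 \<or> vs!i = vs!1" by auto
    moreover have "0 < ?n" "1 < ?n" using vs(1) by auto
    ultimately show False using nth_eq_iff_index_eq[OF vs(2) that(1), of 0] nth_eq_iff_index_eq[OF vs(2) that(1), of 1] that
      by auto
  qed
  have "walk (edges G) (drop 1 vs)" using e unfolding walk_def by simp
  moreover have "{drop 1 vs ! i, drop 1 vs ! Suc i} \<noteq> {vs!0, vs!1}" if "Suc i < length (drop 1 vs)" for i
    using neq[of "Suc (Suc i)" "Suc i"] that by (simp add: insert_commute)
  ultimately have inv: "vs!i \<in> S \<longleftrightarrow> vs!1 \<in> S" if "1 \<le> i" "i < ?n" for i
    using separating_walk[OF S, of "drop 1 vs" "i - 1"] that by simp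
  have "?n - 1 < ?n" "0 < ?n" "?n - 1 \<noteq> 0" "?n - 1 \<noteq> 1" using vs(1) by auto
  then have "{vs!(?n - 1), vs!0} \<noteq> {vs!0, vs!1}" using neq[of "?n - 1" 0] by blast
  then have "vs!(?n - 1) \<in> S \<longleftrightarrow> vs!0 \<in> S" using S2 el by blast
  moreover have "vs!(?n - 1) \<in> S \<longleftrightarrow> vs!1 \<in> S" using inv[of "?n - 1"] vs(1) by simp
  ultimately show False using S1 by blast
qed

lemma nni_swap_simps:
  "verts (nni_swap C a \<beta> b \<gamma>) = verts C" "lab (nni_swap C a \<beta> b \<gamma>) = lab C"
  "edges (nni_swap C a \<beta> b \<gamma>) = (edges C - {{a,\<beta>},{b,\<gamma>}}) \<union> {{a,\<gamma>},{b,\<beta>}}"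
  by (simp_all add: nni_swap_def)

locale nni_setting =
  fixes C :: "'x xgraph" and a b \<beta> \<gamma> :: nat
  assumes wf: "wf_graph C" and ac: "acyclic_graph C" and ab: "{a,b} \<in> edges C"
    and a\<beta>: "{a,\<beta>} \<in> edges C" and \<beta>b: "\<beta> \<noteq> b"
    and b\<gamma>: "{b,\<gamma>} \<in> edges C" and \<gamma>a: "\<gamma> \<noteq> a"
begin

abbreviation "N \<equiv> nni_swap C a \<beta> b \<gamma>"

lemma ab_no_common_nbr: "no_common_nbr C a b" using acyclic_no_common_nbr[OF wf ac ab] .

lemma swap_endpoints: "a \<noteq> b" "a \<noteq> \<beta>" "b \<noteq> \<gamma>" "\<beta> \<noteq> \<gamma>" "a \<in> verts C" "b \<in> verts C" "\<beta> \<in> verts C" "\<gamma> \<in> verts C"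
  "{a,\<gamma>} \<notin> edges C" "{b,\<beta>} \<notin> edges C"
proof -
  show "a \<noteq> b" "a \<in> verts C" "b \<in> verts C" using wf_edge2[OF wf ab] by auto
  show "a \<noteq> \<beta>" "\<beta> \<in> verts C" using wf_edge2[OF wf a\<beta>] by auto
  show "b \<noteq> \<gamma>" "\<gamma> \<in> verts C" using wf_edge2[OF wf b\<gamma>] by auto
  show "{a,\<gamma>} \<notin> edges C" using ab_no_common_nbr b\<gamma> unfolding no_common_nbr_def by blast
  show "{b,\<beta>} \<notin> edges C" using ab_no_common_nbr a\<beta> unfolding no_common_nbr_def by blast
  show "\<beta> \<noteq> \<gamma>"
  proof
    assume "\<beta> = \<gamma>" then show False using ab_no_common_nbr a\<beta> b\<gamma> unfolding no_common_nbr_def by blast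
  qed
qed

lemma wf_swapped: "wf_graph N"
  unfolding wf_graph_def nni_swap_simps
proof (rule conjI)
  show "finite (verts C)" using wf by (simp add: wf_graph_def)
next
  show "\<forall>e\<in>edges C - {{a, \<beta>}, {b, \<gamma>}} \<union> {{a, \<gamma>}, {b, \<beta>}}. e \<subseteq> verts C \<and> card e = 2"
  proof
  fix e assume "e \<in> edges C - {{a, \<beta>}, {b, \<gamma>}} \<union> {{a, \<gamma>}, {b, \<beta>}}"
  then consider "e \<in> edges C" | "e = {a,\<gamma>}" | "e = {b,\<beta>}" by blast
  then show "e \<subseteq> verts C \<and> card e = 2"
  proof cases
    case 1 then show ?thesis using wf by (simp add: wf_graph_def)
  next
    case 2 then show ?thesis using swap_endpoints(5,8) \<gamma>a by simp
  next
    case 3 then show ?thesis using swap_endpoints(6,7) \<beta>b by simp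
  qed
  qed
qed

lemma swapped_ab: "{a,b} \<in> edges N"
  using ab swap_endpoints \<beta>b \<gamma>a by (auto simp: nni_swap_simps doubleton_eq_iff)

lemma swapped_nbrs_a: "nbrs N a = (nbrs C a - {\<beta>}) \<union> {\<gamma>}"
  using swap_endpoints \<beta>b \<gamma>a by (auto simp: nbrs_iff nni_swap_simps doubleton_eq_iff)

lemma swapped_nbrs_b: "nbrs N b = (nbrs C b - {\<gamma>}) \<union> {\<beta>}"
  using swap_endpoints \<beta>b \<gamma>a by (auto simp: nbrs_iff nni_swap_simps doubleton_eq_iff)

lemma contract_swapped: "contract N a b = contract C a b"
proof -
  let ?m = "\<lambda>x. if x = b then a else (x::nat)"
  define E where "E = edges C - {{a,b}} - {{a,\<beta>},{b,\<gamma>}}"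
  have n1: "{a,\<gamma>} \<noteq> {a,b}" "{b,\<beta>} \<noteq> {a,b}" "{a,\<beta>} \<noteq> {a,b}" "{b,\<gamma>} \<noteq> {a,b}"
    using swap_endpoints \<gamma>a \<beta>b by (auto simp: doubleton_eq_iff)
  have N: "edges N - {{a,b}} = E \<union> {{a,\<gamma>},{b,\<beta>}}"
    unfolding nni_swap_simps E_def using n1 by auto
  have C: "edges C - {{a,b}} = E \<union> {{b,\<gamma>},{a,\<beta>}}"
    unfolding E_def using a\<beta> b\<gamma> n1 by blast
  have image_pair_cong: "g ` (E \<union> {x,y}) = g ` (E \<union> {x',y'})" if "g x = g x'" "g y = g y'"
    for g :: "nat set \<Rightarrow> nat set" and E x y x' y'
    using that by auto
  have "?m ` {a,\<gamma>} = ?m ` {b,\<gamma>}" "?m ` {b,\<beta>} = ?m ` {a,\<beta>}"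
    using swap_endpoints \<beta>b \<gamma>a by auto
  then have "(\<lambda>e. ?m ` e) ` (edges N - {{a,b}}) = (\<lambda>e. ?m ` e) ` (edges C - {{a,b}})"
    unfolding N C
    by (rule image_pair_cong)
  then show ?thesis unfolding contract_def Let_def by (simp add: nni_swap_simps)
qed

lemma swapped_no_common_nbr: "no_common_nbr N a b"
  unfolding no_common_nbr_def
proof (intro allI notI)
  fix t assume h: "{a,t} \<in> edges N \<and> {b,t} \<in> edges N"
  then have "t \<in> nbrs N a" "t \<in> nbrs N b" by (auto simp: nbrs_iff)
  then have "t \<in> (nbrs C a - {\<beta>}) \<union> {\<gamma>}" "t \<in> (nbrs C b - {\<gamma>}) \<union> {\<beta>}"
    using swapped_nbrs_a swapped_nbrs_b by auto
  then show False using ab_no_common_nbr swap_endpoints a\<beta> b\<gamma> by (auto simp: no_common_nbr_def nbrs_iff)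
qed

lemma deg_swapped: assumes t: "t \<in> verts C" shows "deg N t = deg C t"
proof -
  have fa: "finite (nbrs C a)" "finite (nbrs C b)" using nbrs_finite[OF wf] by auto
  consider "t = a" | "t = b" | "t \<notin> {a,b}" by blast
  then show ?thesis
  proof cases
    case 1
    have "\<beta> \<in> nbrs C a" "\<gamma> \<notin> nbrs C a" using a\<beta> swap_endpoints by (auto simp: nbrs_iff)
    then have "card ((nbrs C a - {\<beta>}) \<union> {\<gamma>}) = card (nbrs C a)"
      using card_Diff_singleton_Suc[OF fa(1)] fa(1) by (simp add: card_insert_disjoint)
    then show ?thesis using 1 swapped_nbrs_a by (simp add: deg_nbrs[OF wf] deg_nbrs[OF wf_swapped])
  next
    case 2
    have "\<gamma> \<in> nbrs C b" "\<beta> \<notin> nbrs C b" using b\<gamma> swap_endpoints by (auto simp: nbrs_iff insert_commute)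
    then have "card ((nbrs C b - {\<gamma>}) \<union> {\<beta>}) = card (nbrs C b)"
      using card_Diff_singleton_Suc[OF fa(2)] fa(2) by (simp add: card_insert_disjoint)
    then show ?thesis using 2 swapped_nbrs_b by (simp add: deg_nbrs[OF wf] deg_nbrs[OF wf_swapped])
  next
    case 3
    have "deg N t = deg (contract N a b) t" using contract_deg_other[OF wf_swapped swapped_ab 3 swapped_no_common_nbr] by simp
    also have "\<dots> = deg (contract C a b) t" using contract_swapped by simp
    also have "\<dots> = deg C t" using contract_deg_other[OF wf ab 3 ab_no_common_nbr] .
    finally show ?thesis .
  qed
qed

lemma labels_swapped: "labels X N t = labels X C t"
  by (simp add: labels_def nni_swap_simps)

lemma swapped_edgeE:
  assumes "e \<in> edges N"
  obtains "e = {a,\<gamma>}" | "e = {b,\<beta>}" | "e \<in> edges C" "e \<noteq> {a,\<beta>}" "e \<noteq> {b,\<gamma>}"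
  using assms unfolding nni_swap_simps by blast

abbreviation "side_ab \<equiv> side C a b"
abbreviation "side_\<beta>a \<equiv> side C \<beta> a"
abbreviation "side_\<gamma>b \<equiv> side C \<gamma> b"

lemma side_memberships:
  "a \<in> side_ab" "b \<notin> side_ab" "\<beta> \<in> side_ab" "\<gamma> \<notin> side_ab"
  "\<beta> \<in> side_\<beta>a" "a \<notin> side_\<beta>a" "b \<notin> side_\<beta>a" "\<gamma> \<notin> side_\<beta>a"
  "\<gamma> \<in> side_\<gamma>b" "b \<notin> side_\<gamma>b" "a \<notin> side_\<gamma>b" "\<beta> \<notin> side_\<gamma>b"
proof -
  have ba: "{\<beta>,a} \<in> edges C" and gb: "{\<gamma>,b} \<in> edges C" using a\<beta> b\<gamma> by (simp_all add: insert_commute)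
  have d: "{a,b} \<noteq> {\<beta>,a}" "{a,b} \<noteq> {\<gamma>,b}" "{b,\<gamma>} \<noteq> {a,b}" "{b,\<gamma>} \<noteq> {\<beta>,a}"
    "{a,\<beta>} \<noteq> {a,b}" "{a,\<beta>} \<noteq> {\<gamma>,b}"
    using swap_endpoints \<beta>b \<gamma>a by (auto simp: doubleton_eq_iff)
  show m: "a \<in> side_ab" "b \<notin> side_ab" "\<beta> \<in> side_\<beta>a" "a \<notin> side_\<beta>a" "\<gamma> \<in> side_\<gamma>b" "b \<notin> side_\<gamma>b"
    using in_side not_in_side[OF wf ac ab] not_in_side[OF wf ac ba] not_in_side[OF wf ac gb] by auto
  show "b \<notin> side_\<beta>a" using side_closed[OF ab d(1)] m by simp
  show "a \<notin> side_\<gamma>b" using side_closed[OF ab d(2)] m by simp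
  show "\<gamma> \<notin> side_ab" using side_closed[OF b\<gamma> d(3)] m by simp
  show "\<gamma> \<notin> side_\<beta>a" using side_closed[OF b\<gamma> d(4)] side_closed[OF ab d(1)] m by simp
  show "\<beta> \<in> side_ab" using side_closed[OF a\<beta> d(5)] m by simp
  show "\<beta> \<notin> side_\<gamma>b" using side_closed[OF a\<beta> d(6)] side_closed[OF ab d(2)] m by simp
qed

lemma separating_swapped_ab:
  "separating (edges N) {t. (t \<in> side_ab) \<noteq> ((t \<in> side_\<beta>a) \<noteq> (t \<in> side_\<gamma>b))} a b"
  unfolding separating_def
proof (intro conjI allI impI)
  show "(a \<in> {t. (t \<in> side_ab) \<noteq> ((t \<in> side_\<beta>a) \<noteq> (t \<in> side_\<gamma>b))}) =
      (b \<notin> {t. (t \<in> side_ab) \<noteq> ((t \<in> side_\<beta>a) \<noteq> (t \<in> side_\<gamma>b))})"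
    using side_memberships by simp
  fix r s assume rs: "{r,s} \<in> edges N" "{r,s} \<noteq> {a,b}"
  from rs(1) show "(r \<in> {t. (t \<in> side_ab) \<noteq> ((t \<in> side_\<beta>a) \<noteq> (t \<in> side_\<gamma>b))}) =
      (s \<in> {t. (t \<in> side_ab) \<noteq> ((t \<in> side_\<beta>a) \<noteq> (t \<in> side_\<gamma>b))})"
  proof (cases rule: swapped_edgeE)
    case 1 then show ?thesis using side_memberships by (auto simp: doubleton_eq_iff)
  next
    case 2 then show ?thesis using side_memberships by (auto simp: doubleton_eq_iff)
  next
    case 3
    have "{r,s} \<noteq> {\<beta>,a}" "{r,s} \<noteq> {\<gamma>,b}" using 3 by (simp_all add: insert_commute)
    then show ?thesis using side_closed[OF 3(1) rs(2)] side_closed[OF 3(1)] by simp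
  qed
qed

lemma separating_swapped_a\<gamma>: "separating (edges N) side_\<gamma>b a \<gamma>"
  unfolding separating_def
proof (intro conjI allI impI)
  show "(a \<in> side_\<gamma>b) = (\<gamma> \<notin> side_\<gamma>b)" using side_memberships by simp
  fix r s assume rs: "{r,s} \<in> edges N" "{r,s} \<noteq> {a,\<gamma>}"
  from rs(1) show "(r \<in> side_\<gamma>b) = (s \<in> side_\<gamma>b)"
  proof (cases rule: swapped_edgeE)
    case 2 then show ?thesis using side_memberships by (auto simp: doubleton_eq_iff)
  next
    case 3
    have "{r,s} \<noteq> {\<gamma>,b}" using 3 by (simp add: insert_commute)
    then show ?thesis using side_closed[OF 3(1)] by simp
  qed (use rs(2) in simp)
qed

lemma separating_swapped_b\<beta>: "separating (edges N) side_\<beta>a b \<beta>"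
  unfolding separating_def
proof (intro conjI allI impI)
  show "(b \<in> side_\<beta>a) = (\<beta> \<notin> side_\<beta>a)" using side_memberships by simp
  fix r s assume rs: "{r,s} \<in> edges N" "{r,s} \<noteq> {b,\<beta>}"
  from rs(1) show "(r \<in> side_\<beta>a) = (s \<in> side_\<beta>a)"
  proof (cases rule: swapped_edgeE)
    case 1 then show ?thesis using side_memberships by (auto simp: doubleton_eq_iff)
  next
    case 3
    have "{r,s} \<noteq> {\<beta>,a}" using 3 by (simp add: insert_commute)
    then show ?thesis using side_closed[OF 3(1)] by simp
  qed (use rs(2) in simp)
qed

lemma separating_swapped_other:
  assumes pq: "{p,q} \<in> edges C" "{p,q} \<noteq> {a,b}" "{p,q} \<noteq> {a,\<beta>}" "{p,q} \<noteq> {b,\<gamma>}"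
  shows "separating (edges N) (side C p q) p q"
  unfolding separating_def
proof (intro conjI allI impI)
  show "(p \<in> side C p q) = (q \<notin> side C p q)" using in_side not_in_side[OF wf ac pq(1)] by simp
  have ab: "a \<in> side C p q \<longleftrightarrow> b \<in> side C p q" using side_closed[OF ab] pq(2) by metis
  fix r s assume rs: "{r,s} \<in> edges N" "{r,s} \<noteq> {p,q}"
  from rs(1) show "(r \<in> side C p q) = (s \<in> side C p q)"
  proof (cases rule: swapped_edgeE)
    case 1 then show ?thesis using ab side_closed[OF b\<gamma>] pq(4) by (auto simp: doubleton_eq_iff)
  next
    case 2 then show ?thesis using ab side_closed[OF a\<beta>] pq(3) by (auto simp: doubleton_eq_iff)
  next
    case 3 then show ?thesis using side_closed[OF 3(1) rs(2)] by simp
  qed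
qed

lemma acyclic_swapped: "acyclic_graph N"
proof (rule acyclic_of_sides[OF wf_swapped])
  fix p q assume "{p,q} \<in> edges N"
  then show "\<exists>S. separating (edges N) S p q"
  proof (cases rule: swapped_edgeE)
    case 1 then show ?thesis
      using separating_swapped_a\<gamma> separating_sym[OF separating_swapped_a\<gamma>] by (auto simp: doubleton_eq_iff)
  next
    case 2 then show ?thesis
      using separating_swapped_b\<beta> separating_sym[OF separating_swapped_b\<beta>] by (auto simp: doubleton_eq_iff)
  next
    case 3 show ?thesis
    proof (cases "{p,q} = {a,b}")
      case True then show ?thesis
        using separating_swapped_ab separating_sym[OF separating_swapped_ab] by (auto simp: doubleton_eq_iff)
    next
      case False then show ?thesis using separating_swapped_other 3 by blast
    qed
  qed
qed

end

lemma xforest_of_xtree: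
  assumes T: "is_xtree X G" and X: "X \<noteq> {}"
  shows "is_xforest X G"
proof -
  have wf: "wf_graph G" using T by (rule xtree_wf)
  have lv: "lab G ` X \<subseteq> verts G" using T by (rule xtree_lab)
  have c: "connected_graph G" using T by (rule xtree_connected)
  have ne: "verts G \<noteq> {}" using T by (simp add: is_xtree_def is_tree_def)
  let ?R = "{(u, v). u \<in> verts G \<and> v \<in> verts G \<and> (u, v) \<in> (adjrel G)\<^sup>*}"
  have Rx: "?R `` {x} = verts G" if "x \<in> verts G" for x
    using that c by (auto simp: connected_graph_def)
  have comp: "components G = {verts G}"
    unfolding components_def quotient_def using Rx ne by auto
  have ind: "induced G (verts G) = G"
  proof -
    have "{e \<in> edges G. e \<subseteq> verts G} = edges G" using wf by (auto simp: wf_graph_def)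
    then show ?thesis by (simp add: induced_def)
  qed
  have blk: "{x \<in> X. lab G x \<in> verts G} = X" using lv by auto
  show ?thesis unfolding is_xforest_def comp using wf lv T X blk ind by simp
qed

context nni_setting
begin

lemma binary_swapped: "binary X C \<Longrightarrow> binary X N"
  unfolding binary_def using deg_swapped labels_swapped by (simp add: nni_swap_simps)

lemma connected_swapped: "connected_graph C \<Longrightarrow> connected_graph N"
  using connected_uncontract[OF wf_swapped swapped_ab] contract_swapped contract_connected[OF wf ab] by simp

lemma inCX_swapped:
  assumes C: "in_CX X C" shows "in_CX X N"
proof -
  have T: "is_xtree X C" using C by (rule inCX_xtree)
  have TN: "is_xtree X N"
    unfolding is_xtree_def is_tree_def
  proof (intro conjI ballI impI)
    show "wf_graph N" by (rule wf_swapped)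
    show "verts N \<noteq> {}" using swap_endpoints by (auto simp: nni_swap_simps)
    show "connected_graph N" using connected_swapped xtree_connected[OF T] by simp
    show "acyclic_graph N" by (rule acyclic_swapped)
    show "lab N ` X \<subseteq> verts N" using xtree_lab[OF T] by (simp add: nni_swap_simps)
  next
    fix v assume v: "v \<in> verts N" "\<not> labeled X N v"
    then have "v \<in> verts C" "\<not> labeled X C v" by (auto simp: nni_swap_simps labeled_def)
    then have "deg C v \<ge> 3" using T by (simp add: is_xtree_def)
    then show "deg N v \<ge> 3" using deg_swapped \<open>v \<in> verts C\<close> by simp
  qed
  show ?thesis using inCX_of_binary[OF TN binary_swapped[OF binary_of_inCX[OF C]]] .
qed

end

section \<open>Branches and displayed quartets\<close>

definition edges_off :: "'x xgraph \<Rightarrow> nat \<Rightarrow> nat \<Rightarrow> nat set set" where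
  "edges_off G a b = {e \<in> edges G. a \<notin> e \<and> b \<notin> e}"

definition reach_from :: "nat set set \<Rightarrow> nat \<Rightarrow> nat set" where
  "reach_from E p = {t. (p,t) \<in> (adj E)\<^sup>*}"

lemma (in nni_setting) edges_off_swapped: "edges_off N a b = edges_off C a b"
proof (rule set_eqI)
  fix e
  show "e \<in> edges_off N a b \<longleftrightarrow> e \<in> edges_off C a b"
  proof (cases "a \<notin> e \<and> b \<notin> e")
    case True
    then have "e \<noteq> {a,\<beta>}" "e \<noteq> {b,\<gamma>}" "e \<noteq> {a,\<gamma>}" "e \<noteq> {b,\<beta>}" by auto
    then show ?thesis using True by (simp add: edges_off_def nni_swap_simps)
  next
    case False then show ?thesis by (auto simp: edges_off_def)
  qed
qed

lemma edges_off_subset: "edges_off G a b \<subseteq> edges G" by (auto simp: edges_off_def)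

lemma edges_off_sym: "edges_off G b a = edges_off G a b" by (auto simp: edges_off_def)

lemma reach_from_self: "p \<in> reach_from E p" by (simp add: reach_from_def)

lemma reach_from_meet: "t \<in> reach_from E p \<Longrightarrow> t \<in> reach_from E q \<Longrightarrow> q \<in> reach_from E p"
proof -
  assume "t \<in> reach_from E p" "t \<in> reach_from E q"
  then have "(p,t) \<in> (adj E)\<^sup>*" "(q,t) \<in> (adj E)\<^sup>*" by (auto simp: reach_from_def)
  then have "(p,t) \<in> (adj E)\<^sup>*" "(t,q) \<in> (adj E)\<^sup>*" using adj_sym by auto
  then show ?thesis unfolding reach_from_def by (simp add: rtrancl_trans)
qed

lemma reach_from_edges_off:
  assumes "t \<in> reach_from (edges_off G a b) p" "p \<notin> {a,b}" shows "t \<notin> {a,b}"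
proof -
  have "(p,t) \<in> (adj (edges_off G a b))\<^sup>*" using assms(1) by (simp add: reach_from_def)
  then show ?thesis
  proof (cases rule: rtrancl.cases)
    case rtrancl_refl then show ?thesis using assms(2) by simp
  next
    case (rtrancl_into_rtrancl y)
    then show ?thesis by (auto simp: edges_off_def insert_commute)
  qed
qed

lemma reach_from_step: "t \<in> reach_from E p \<Longrightarrow> {t,s} \<in> E \<Longrightarrow> s \<in> reach_from E p"
  unfolding reach_from_def by (simp add: rtrancl_into_rtrancl)

lemma walk_mono: "walk E ps \<Longrightarrow> E \<subseteq> E' \<Longrightarrow> walk E' ps"
  unfolding walk_def by blast

lemma walk_verts_edge:
  assumes "walk E ps" "x \<in> set ps" "x \<noteq> hd ps" shows "\<exists>e\<in>E. x \<in> e"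
proof -
  obtain i where i: "i < length ps" "ps!i = x" using assms(2) by (metis in_set_conv_nth)
  have "i \<noteq> 0" using i assms(3) by (metis hd_conv_nth length_greater_0_conv less_nat_zero_code)
  then have "Suc (i - 1) < length ps" "Suc (i-1) = i" using i by auto
  then have "{ps!(i-1), ps!i} \<in> E" using assms(1) unfolding walk_def by metis
  then show ?thesis using i by blast
qed

lemma walk_avoiding:
  assumes wf: "wf_graph T" and r: "(p,q) \<in> (adj (edges_off T a b))\<^sup>*" and p: "p \<notin> {a,b}" "p \<in> verts T"
  shows "\<exists>ps. distinct ps \<and> ps \<noteq> [] \<and> hd ps = p \<and> last ps = q \<and> walk (edges T) ps \<and> set ps \<subseteq> verts T - {a,b}"
proof -
  obtain ps where ps: "distinct ps" "ps \<noteq> []" "hd ps = p" "last ps = q" "walk (edges_off T a b) ps"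
    using distinct_walk_of_rtrancl[OF r] by blast
  have "set ps \<subseteq> verts T - {a,b}"
  proof
    fix x assume x: "x \<in> set ps"
    show "x \<in> verts T - {a,b}"
    proof (cases "x = hd ps")
      case True then show ?thesis using ps(3) p by simp
    next
      case False
      then obtain e where e: "e \<in> edges_off T a b" "x \<in> e" using walk_verts_edge[OF ps(5) x] by blast
      then have "e \<subseteq> verts T" using wf by (auto simp: edges_off_def wf_graph_def)
      then show ?thesis using e by (auto simp: edges_off_def)
    qed
  qed
  moreover have "walk (edges T) ps" using walk_mono[OF ps(5) edges_off_subset] .
  ultimately show ?thesis using ps by blast
qed

lemma walk_Cons_hd: "walk E ps \<Longrightarrow> ps \<noteq> [] \<Longrightarrow> {a, hd ps} \<in> E \<Longrightarrow> walk E (a # ps)"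
  by (cases ps) (auto simp: walk_Cons)

lemma no_path_across_edge:
  assumes wf: "wf_graph T" and ac: "acyclic_graph T" and ab: "{a,b} \<in> edges T"
    and ap: "{a,p} \<in> edges T" and bq: "{b,q} \<in> edges T" and p: "p \<notin> {a,b}"
    and r: "(p,q) \<in> (adj (edges_off T a b))\<^sup>*"
  shows False
proof -
  have pv: "p \<in> verts T" using wf_edge2[OF wf ap] by simp
  have ab': "a \<noteq> b" "a \<in> verts T" "b \<in> verts T" using wf_edge2[OF wf ab] by auto
  obtain ps where ps: "distinct ps" "ps \<noteq> []" "hd ps = p" "last ps = q" "walk (edges T) ps"
     "set ps \<subseteq> verts T - {a,b}" using walk_avoiding[OF wf r p pv] by blast
  let ?vs = "a # ps @ [b]"
  have d: "distinct ?vs" using ps(1,6) ab' by auto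
  have l: "length ?vs \<ge> 3" using ps(2) by (cases ps) auto
  have s: "set ?vs \<subseteq> verts T" using ps(6) ab' by auto
  have w1: "walk (edges T) (ps @ [b])" using walk_snoc[OF ps(5) ps(2)] bq ps(4) by (simp add: insert_commute)
  have w: "walk (edges T) ?vs" using walk_Cons_hd[OF w1] ps(2,3) ap by simp
  have c: "{last ?vs, hd ?vs} \<in> edges T" using ab by (simp add: insert_commute)
  show False using acyclic_no_closed_walk[OF ac d l s w c] .
qed

lemma no_path_between_nbrs:
  assumes wf: "wf_graph T" and ac: "acyclic_graph T" and ab: "{a,b} \<in> edges T"
    and ap: "{a,p} \<in> edges T" and aq: "{a,q} \<in> edges T" and p: "p \<notin> {a,b}" and pq: "p \<noteq> q"
    and r: "(p,q) \<in> (adj (edges_off T a b))\<^sup>*"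
  shows False
proof -
  have pv: "p \<in> verts T" using wf_edge2[OF wf ap] by simp
  have ab': "a \<noteq> b" "a \<in> verts T" "b \<in> verts T" using wf_edge2[OF wf ab] by auto
  obtain ps where ps: "distinct ps" "ps \<noteq> []" "hd ps = p" "last ps = q" "walk (edges T) ps"
     "set ps \<subseteq> verts T - {a,b}" using walk_avoiding[OF wf r p pv] by blast
  let ?vs = "a # ps"
  have d: "distinct ?vs" using ps(1,6) ab' by auto
  have l2: "length ps \<ge> 2"
  proof (rule ccontr)
    assume "\<not> length ps \<ge> 2"
    moreover have "length ps > 0" using ps(2) by simp
    ultimately have "length ps = 1" by linarith
    then obtain x where "ps = [x]" by (metis One_nat_def length_0_conv length_Suc_conv)
    then show False using ps(3,4) pq by simp
  qed
  then have l: "length ?vs \<ge> 3" by simp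
  have s: "set ?vs \<subseteq> verts T" using ps(6) ab' by auto
  have w: "walk (edges T) ?vs" using walk_Cons_hd[OF ps(5) ps(2)] ps(3) ap by simp
  have c: "{last ?vs, hd ?vs} \<in> edges T" using aq ps(2,4) by (simp add: insert_commute)
  show False using acyclic_no_closed_walk[OF ac d l s w c] .
qed

definition path_from :: "'x xgraph \<Rightarrow> nat \<Rightarrow> nat \<Rightarrow> nat list \<Rightarrow> bool" where
  "path_from C a p xs \<longleftrightarrow> distinct xs \<and> 2 \<le> length xs \<and> xs!0 = a \<and> xs!1 = p \<and>
     walk (edges C) xs \<and> set xs \<subseteq> verts C"

lemma longest_path_from:
  assumes wf: "wf_graph C" and ap: "{a,p} \<in> edges C"
  obtains xs where "path_from C a p xs" "\<And>ys. path_from C a p ys \<Longrightarrow> length ys \<le> length xs"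
proof -
  let ?Q = "\<lambda>n. \<exists>xs. path_from C a p xs \<and> length xs = n"
  have "path_from C a p [a,p]" using ap wf_edge2[OF wf ap] by (auto simp: path_from_def walk_def)
  then have q2: "?Q 2" by auto
  have bnd: "\<forall>n. ?Q n \<longrightarrow> n < Suc (card (verts C))"
  proof (intro allI impI)
    fix n assume "?Q n"
    then obtain xs where xs: "path_from C a p xs" "length xs = n" by blast
    then have "card (set xs) = n" by (simp add: path_from_def distinct_card)
    moreover have "card (set xs) \<le> card (verts C)"
      using xs wf by (intro card_mono) (auto simp: path_from_def wf_graph_def)
    ultimately show "n < Suc (card (verts C))" by simp
  qed
  obtain n0 where "?Q n0" "\<forall>n. ?Q n \<longrightarrow> n \<le> n0" using ex_has_greatest_nat[OF q2 bnd] by auto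
  then show ?thesis using that by blast
qed

lemma path_from_avoids:
  assumes wf: "wf_graph C" and ac: "acyclic_graph C" and ab: "{a,b} \<in> edges C" and pb: "p \<noteq> b"
    and xs: "path_from C a p xs"
  shows "b \<notin> set xs"
proof
  assume "b \<in> set xs"
  then obtain j where j: "j < length xs" "xs!j = b" by (metis in_set_conv_nth)
  have xs': "distinct xs" "2 \<le> length xs" "xs!0 = a" "xs!1 = p" "walk (edges C) xs" "set xs \<subseteq> verts C"
    using xs by (simp_all add: path_from_def)
  have "a \<noteq> b" using wf_edge2[OF wf ab] by simp
  let ?vs = "take (Suc j) xs"
  have j2: "j \<ge> 2" using j xs'(3,4) pb \<open>a \<noteq> b\<close> by (cases j; cases "j - 1") auto
  then have l: "length ?vs \<ge> 3" using j by simp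
  have s: "set ?vs \<subseteq> verts C" using xs'(6) by (meson order_trans set_take_subset)
  have c: "{last ?vs, hd ?vs} \<in> edges C"
    using j j2 xs'(2,3) ab by (simp add: take_Suc_conv_app_nth hd_conv_nth nth_append insert_commute)
  have d: "distinct ?vs" using xs'(1) by simp
  show False by (rule acyclic_no_closed_walk[OF ac d l s walk_take[OF xs'(5)] c])
qed

lemma path_from_in_reach_from:
  assumes wf: "wf_graph C" and ac: "acyclic_graph C" and ab: "{a,b} \<in> edges C" and pb: "p \<noteq> b"
    and xs: "path_from C a p xs" and i: "1 \<le> i" "i < length xs"
  shows "xs!i \<in> reach_from (edges_off C a b) p"
  using i
proof (induction i)
  case (Suc i)
  have xs': "distinct xs" "xs!0 = a" "xs!1 = p" "walk (edges C) xs"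
    using xs by (simp_all add: path_from_def)
  show ?case
  proof (cases "i = 0")
    case True then show ?thesis using xs'(3) reach_from_self by simp
  next
    case False
    have "0 < length xs" using Suc.prems by linarith
    then have "xs!i \<noteq> xs!0" "xs!Suc i \<noteq> xs!0"
      using nth_eq_iff_index_eq[OF xs'(1), of i 0] nth_eq_iff_index_eq[OF xs'(1), of "Suc i" 0] Suc.prems False
      by simp_all
    then have "xs!i \<noteq> a" "xs!Suc i \<noteq> a" using xs'(2) by simp_all
    moreover have "xs!i \<noteq> b" "xs!Suc i \<noteq> b"
      using path_from_avoids[OF wf ac ab pb xs] Suc.prems by (auto simp: nth_mem)
    moreover have "{xs!i, xs!Suc i} \<in> edges C" using xs'(4) Suc.prems unfolding walk_def by blast
    ultimately have "{xs!i, xs!Suc i} \<in> edges_off C a b" by (simp add: edges_off_def)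
    then show ?thesis using reach_from_step Suc False by simp
  qed
qed simp

lemma longest_path_from_ends_in_leaf:
  assumes wf: "wf_graph C" and ac: "acyclic_graph C" and B: "binary X C"
    and xs: "path_from C a p xs" and longest: "\<And>ys. path_from C a p ys \<Longrightarrow> length ys \<le> length xs"
  shows "deg C (last xs) = 1"
proof (rule ccontr)
  have xs': "distinct xs" "2 \<le> length xs" "xs!0 = a" "xs!1 = p" "walk (edges C) xs" "set xs \<subseteq> verts C"
    using xs by (simp_all add: path_from_def)
  let ?n = "length xs"
  let ?z = "xs!(?n - 1)" and ?y = "xs!(?n - 2)"
  have "xs \<noteq> []" using xs'(2) by (cases xs) auto
  then have zl: "last xs = ?z" by (simp add: last_conv_nth)
  have "?z \<in> verts C" using xs'(2,6) by (simp add: subset_iff)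
  moreover assume "deg C (last xs) \<noteq> 1"
  ultimately have "card (nbrs C ?z) = 3" using B zl deg_nbrs[OF wf] unfolding binary_def by fastforce
  then have "\<not> nbrs C ?z \<subseteq> {?y}" using card_mono[of "{?y}" "nbrs C ?z"] by auto
  then obtain y' where "y' \<in> nbrs C ?z" "y' \<noteq> ?y" by blast
  then have y': "{?z, y'} \<in> edges C" "y' \<noteq> ?y" by (simp_all add: nbrs_iff)
  show False
  proof (cases "y' \<in> set xs")
    case True
    then obtain j where j: "j < ?n" "xs!j = y'" by (metis in_set_conv_nth)
    have "j \<noteq> ?n - 1" "j \<noteq> ?n - 2" using j y' wf_edge2[OF wf y'(1)] by auto
    then have j3: "j + 3 \<le> ?n" using j by linarith
    have c: "{last (drop j xs), hd (drop j xs)} \<in> edges C"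
      using j j3 zl y'(1) by (simp add: hd_drop_conv_nth)
    have d: "distinct (drop j xs)" and l: "length (drop j xs) \<ge> 3" using xs'(1) j3 by simp_all
    have s: "set (drop j xs) \<subseteq> verts C" using xs'(6) by (meson order_trans set_drop_subset)
    show False by (rule acyclic_no_closed_walk[OF ac d l s walk_drop[OF xs'(5)] c])
  next
    case False
    have "path_from C a p (xs @ [y'])"
      using xs' False walk_snoc[OF xs'(5)] y'(1) zl wf_edge2[OF wf y'(1)]
      by (auto simp: path_from_def nth_append)
    then show False using longest by fastforce
  qed
qed

lemma label_in_reach_from:
  assumes wf: "wf_graph C" and ac: "acyclic_graph C" and B: "binary X C"
    and ab: "{a,b} \<in> edges C" and ap: "{a,p} \<in> edges C" and pb: "p \<noteq> b"
  shows "\<exists>x\<in>X. lab C x \<in> reach_from (edges_off C a b) p"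
proof -
  obtain xs where xs: "path_from C a p xs" and longest: "\<And>ys. path_from C a p ys \<Longrightarrow> length ys \<le> length xs"
    using longest_path_from[OF wf ap] by blast
  have len: "2 \<le> length xs" and sub: "set xs \<subseteq> verts C" using xs by (simp_all add: path_from_def)
  have "xs \<noteq> []" using len by (cases xs) auto
  then have z: "last xs = xs!(length xs - 1)" by (simp add: last_conv_nth)
  have "last xs \<in> verts C" using len sub z by (simp add: subset_iff)
  then have "labels X C (last xs) \<noteq> {}"
    using B longest_path_from_ends_in_leaf[OF wf ac B xs longest] unfolding binary_def by fastforce
  then obtain x where x: "x \<in> X" "lab C x = last xs" by (auto simp: labels_def)
  have "last xs \<in> reach_from (edges_off C a b) p"
    using path_from_in_reach_from[OF wf ac ab pb xs, of "length xs - 1"] len z by simp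
  then show ?thesis using x by (intro bexI[of _ x]) simp_all
qed

definition single_crossing :: "nat set set \<Rightarrow> nat set \<Rightarrow> bool" where
  "single_crossing E S \<longleftrightarrow> (\<forall>r s r' s'. {r,s} \<in> E \<longrightarrow> {r',s'} \<in> E \<longrightarrow> r \<in> S \<longrightarrow> s \<notin> S \<longrightarrow> r' \<in> S \<longrightarrow> s' \<notin> S
      \<longrightarrow> {r,s} = {r',s'})"

text \<open>The quartet x1 x2 | x3 x4 is displayed: one edge separates the leaves of x1, x2
  from those of x3, x4.\<close>
definition splits_quartet :: "'x xgraph \<Rightarrow> 'x \<Rightarrow> 'x \<Rightarrow> 'x \<Rightarrow> 'x \<Rightarrow> bool" where
  "splits_quartet G x1 x2 x3 x4 \<longleftrightarrow> (\<exists>S. lab G x1 \<in> S \<and> lab G x2 \<in> S \<and> lab G x3 \<notin> S \<and> lab G x4 \<notin> S \<and> single_crossing (edges G) S)"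

lemma splits_quartet_isom:
  assumes iso: "isom X G H f" and wf: "wf_graph G" and lv: "lab G ` X \<subseteq> verts G"
    and x: "x1 \<in> X" "x2 \<in> X" "x3 \<in> X" "x4 \<in> X" and P: "splits_quartet H x1 x2 x3 x4"
  shows "splits_quartet G x1 x2 x3 x4"
proof -
  obtain S where S: "lab H x1 \<in> S" "lab H x2 \<in> S" "lab H x3 \<notin> S" "lab H x4 \<notin> S" "single_crossing (edges H) S"
    using P by (auto simp: splits_quartet_def)
  let ?S = "{t \<in> verts G. f t \<in> S}"
  have lab: "lab H x = f (lab G x)" "lab G x \<in> verts G" if "x \<in> X" for x
    using isom_lab[OF iso that] lv that by auto
  have inj: "inj_on f (verts G)" using isom_inj[OF iso] .
  have oc: "single_crossing (edges G) ?S"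
    unfolding single_crossing_def
  proof (intro allI impI)
    fix r s r' s'
    assume h: "{r,s} \<in> edges G" "{r',s'} \<in> edges G" "r \<in> ?S" "s \<notin> ?S" "r' \<in> ?S" "s' \<notin> ?S"
    have v: "r \<in> verts G" "s \<in> verts G" "r' \<in> verts G" "s' \<in> verts G"
      using wf_edge2[OF wf h(1)] wf_edge2[OF wf h(2)] by auto
    have "{f r, f s} \<in> edges H" "{f r', f s'} \<in> edges H"
      using isom_edge[OF iso] v h(1,2) by auto
    moreover have "f r \<in> S" "f s \<notin> S" "f r' \<in> S" "f s' \<notin> S" using h(3-6) v by auto
    ultimately have "{f r, f s} = {f r', f s'}" using S(5) unfolding single_crossing_def by blast
    then have "f ` {r,s} = f ` {r',s'}" by simp
    moreover have "{r,s} \<subseteq> verts G" "{r',s'} \<subseteq> verts G" using v by auto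
    ultimately show "{r,s} = {r',s'}" using inj_on_image_eq_iff[OF inj] by blast
  qed
  show ?thesis unfolding splits_quartet_def
    by (rule exI[of _ ?S]) (use S lab x oc in auto)
qed

lemma crossing_edge:
  assumes "(s,t) \<in> (adj E)\<^sup>*" "s \<in> S" "t \<notin> S"
  shows "\<exists>r r'. {r,r'} \<in> E \<and> r \<in> S \<and> r' \<notin> S"
proof (rule ccontr)
  assume n: "\<not> (\<exists>r r'. {r,r'} \<in> E \<and> r \<in> S \<and> r' \<notin> S)"
  have "t' \<in> S" if "(s,t') \<in> (adj E)\<^sup>*" for t'
    using that
  proof (induction rule: rtrancl_induct)
    case base then show ?case using assms(2) .
  next
    case (step y z) then show ?case using n by auto
  qed
  then show False using assms by blast
qed

lemma reach_restrict:
  assumes "(p,t) \<in> (adj E)\<^sup>*"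
  shows "(p,t) \<in> (adj {e \<in> E. e \<subseteq> reach_from E p})\<^sup>*"
  using assms
proof (induction rule: rtrancl_induct)
  case base then show ?case by simp
next
  case (step y z)
  have "y \<in> reach_from E p" "z \<in> reach_from E p" using step(1,2) by (auto simp: reach_from_def rtrancl_into_rtrancl)
  then have "{y,z} \<in> {e \<in> E. e \<subseteq> reach_from E p}" using step(2) by auto
  then show ?case using step(3) by (simp add: rtrancl_into_rtrancl)
qed

lemma single_crossing_side_at:
  assumes wf: "wf_graph T" and ac: "acyclic_graph T" and ab: "{a,b} \<in> edges T"
    and na: "nbrs T a = {b, p1, p2}" and p: "p1 \<notin> {a,b}" "p2 \<notin> {a,b}"
  shows "single_crossing (edges T) (reach_from (edges_off T a b) p1 \<union> reach_from (edges_off T a b) p2 \<union> {a})"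
proof -
  let ?R = "reach_from (edges_off T a b)"
  let ?S = "?R p1 \<union> ?R p2 \<union> {a}"
  have ap: "{a,p1} \<in> edges T" "{a,p2} \<in> edges T" using na by (auto simp: nbrs_iff)
  have cr: "{r,s} = {a,b}" if rs: "{r,s} \<in> edges T" "r \<in> ?S" "s \<notin> ?S" for r s
  proof (cases "r = a")
    case True
    then have "s \<in> {b,p1,p2}" using rs(1) na by (simp add: nbrs_iff[symmetric])
    moreover have "p1 \<in> ?S" "p2 \<in> ?S" using reach_from_self by auto
    ultimately show ?thesis using True rs(3) by auto
  next
    case False
    then obtain pp where pp: "pp \<in> {p1,p2}" "r \<in> ?R pp" using rs(2) by auto
    have ppn: "pp \<notin> {a,b}" "{a,pp} \<in> edges T" using pp(1) p ap by auto
    have rn: "r \<notin> {a,b}" using reach_from_edges_off[OF pp(2) ppn(1)] .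
    show ?thesis
    proof (cases "s = b")
      case True
      then have br: "{b,r} \<in> edges T" using rs(1) by (simp add: insert_commute)
      have "(pp,r) \<in> (adj (edges_off T a b))\<^sup>*" using pp(2) by (simp add: reach_from_def)
      then show ?thesis using no_path_across_edge[OF wf ac ab ppn(2) br ppn(1)] by simp
    next
      case False
      then have "{r,s} \<in> edges_off T a b" using rs rn by (auto simp: edges_off_def)
      then have "s \<in> ?R pp" using reach_from_step[OF pp(2)] by blast
      then show ?thesis using rs(3) pp(1) by auto
    qed
  qed
  show ?thesis unfolding single_crossing_def
  proof (intro allI impI)
    fix r s r' s' assume h: "{r,s} \<in> edges T" "{r',s'} \<in> edges T" "r \<in> ?S" "s \<notin> ?S" "r' \<in> ?S" "s' \<notin> ?S"
    show "{r,s} = {r',s'}" using cr[OF h(1,3,4)] cr[OF h(2,5,6)] by simp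
  qed
qed

lemma splits_quartet_at_edge:
  assumes wf: "wf_graph T" and ac: "acyclic_graph T" and ab: "{a,b} \<in> edges T"
    and na: "nbrs T a = {b, p1, p2}" and p: "p1 \<notin> {a,b}" "p2 \<notin> {a,b}"
    and bq: "{b,q1} \<in> edges T" "{b,q2} \<in> edges T" and q: "q1 \<notin> {a,b}" "q2 \<notin> {a,b}"
    and l: "lab T x1 \<in> reach_from (edges_off T a b) p1" "lab T x2 \<in> reach_from (edges_off T a b) p2"
      "lab T x3 \<in> reach_from (edges_off T a b) q1" "lab T x4 \<in> reach_from (edges_off T a b) q2"
  shows "splits_quartet T x1 x2 x3 x4"
proof -
  let ?R = "reach_from (edges_off T a b)"
  let ?S = "?R p1 \<union> ?R p2 \<union> {a}"
  have ap: "{a,p1} \<in> edges T" "{a,p2} \<in> edges T" using na by (auto simp: nbrs_iff)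
  have outside: "t \<notin> ?S" if t: "t \<in> ?R q" and q': "{b,q} \<in> edges T" "q \<notin> {a,b}" for t q
  proof -
    have "t \<notin> ?R p" if "p \<in> {p1,p2}" for p
    proof
      assume "t \<in> ?R p"
      then have "q \<in> ?R p" using reach_from_meet t by blast
      then show False using no_path_across_edge[OF wf ac ab _ q'(1)] that ap p by (auto simp: reach_from_def)
    qed
    then show ?thesis using reach_from_edges_off[OF t q'(2)] by blast
  qed
  show ?thesis unfolding splits_quartet_def
  proof (intro exI[of _ ?S] conjI)
    show "lab T x1 \<in> ?S" "lab T x2 \<in> ?S" using l(1,2) by simp_all
    show "lab T x3 \<notin> ?S" "lab T x4 \<notin> ?S"
      using outside[OF l(3) bq(1) q(1)] outside[OF l(4) bq(2) q(2)] .
    show "single_crossing (edges T) ?S" using single_crossing_side_at[OF wf ac ab na p] .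
  qed
qed

lemma not_splits_quartet:
  assumes E0: "E0 \<subseteq> edges T"
    and e: "{p1,a} \<in> edges T" "{a,q1} \<in> edges T" "{p2,b} \<in> edges T" "{b,q2} \<in> edges T"
    and l: "m1 \<in> reach_from E0 p1" "n1 \<in> reach_from E0 q1" "m2 \<in> reach_from E0 p2" "n2 \<in> reach_from E0 q2"
    and disj: "(reach_from E0 p1 \<union> reach_from E0 q1 \<union> {a}) \<inter> (reach_from E0 p2 \<union> reach_from E0 q2 \<union> {b}) = {}"
    and S: "m1 \<in> S" "n1 \<notin> S" "m2 \<in> S" "n2 \<notin> S" "single_crossing (edges T) S"
  shows False
proof -
  have path: "(m, n) \<in> (adj {e \<in> edges T. e \<subseteq> reach_from E0 p \<union> reach_from E0 q \<union> {z}})\<^sup>*"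
    if m: "m \<in> reach_from E0 p" and n: "n \<in> reach_from E0 q" and pz: "{p,z} \<in> edges T" and zq: "{z,q} \<in> edges T"
    for m n p q z
  proof -
    let ?E = "{e \<in> edges T. e \<subseteq> reach_from E0 p \<union> reach_from E0 q \<union> {z}}"
    have r1: "(p, m) \<in> (adj ?E)\<^sup>*"
    proof -
      have r: "(p,m) \<in> (adj {e \<in> E0. e \<subseteq> reach_from E0 p})\<^sup>*" using reach_restrict m by (simp add: reach_from_def)
      have sb: "{e \<in> E0. e \<subseteq> reach_from E0 p} \<subseteq> ?E" using E0 by auto
      show ?thesis using adj_mono[OF sb r] .
    qed
    have r2: "(q, n) \<in> (adj ?E)\<^sup>*"
    proof -
      have r: "(q,n) \<in> (adj {e \<in> E0. e \<subseteq> reach_from E0 q})\<^sup>*" using reach_restrict n by (simp add: reach_from_def)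
      have sb: "{e \<in> E0. e \<subseteq> reach_from E0 q} \<subseteq> ?E" using E0 by auto
      show ?thesis using adj_mono[OF sb r] .
    qed
    have "{p,z} \<in> ?E" "{z,q} \<in> ?E" using pz zq reach_from_self by auto
    then have "(p,z) \<in> adj ?E" "(z,q) \<in> adj ?E" by auto
    then have "(p,q) \<in> (adj ?E)\<^sup>*" by (meson rtrancl.rtrancl_into_rtrancl r_into_rtrancl)
    then show ?thesis using adj_sym[OF r1] r2 by (meson rtrancl_trans)
  qed
  have P1: "(m1, n1) \<in> (adj {e \<in> edges T. e \<subseteq> reach_from E0 p1 \<union> reach_from E0 q1 \<union> {a}})\<^sup>*"
    using path[OF l(1) l(2) e(1) e(2)] .
  have P2: "(m2, n2) \<in> (adj {e \<in> edges T. e \<subseteq> reach_from E0 p2 \<union> reach_from E0 q2 \<union> {b}})\<^sup>*"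
    using path[OF l(3) l(4) e(3) e(4)] .
  obtain r r' where c1: "{r,r'} \<in> edges T" "{r,r'} \<subseteq> reach_from E0 p1 \<union> reach_from E0 q1 \<union> {a}" "r \<in> S" "r' \<notin> S"
    using crossing_edge[OF P1 S(1,2)] by auto
  obtain t t' where c2: "{t,t'} \<in> edges T" "{t,t'} \<subseteq> reach_from E0 p2 \<union> reach_from E0 q2 \<union> {b}" "t \<in> S" "t' \<notin> S"
    using crossing_edge[OF P2 S(3,4)] by auto
  have "{r,r'} = {t,t'}" using S(5) c1 c2 unfolding single_crossing_def by blast
  then have "r \<in> reach_from E0 p2 \<union> reach_from E0 q2 \<union> {b}" using c2(2) by auto
  moreover have "r \<in> reach_from E0 p1 \<union> reach_from E0 q1 \<union> {a}" using c1(2) by auto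
  ultimately show False using disj by blast
qed

lemma card_2_subset_of_4:
  fixes p q r s :: nat
  assumes d: "distinct [p,q,r,s]" and A: "A \<subseteq> {p,q,r,s}" and c: "card A = 2"
  shows "A = {p,q} \<or> A = {r,s} \<or> A = {p,r} \<or> A = {q,s} \<or> A = {p,s} \<or> A = {q,r}"
proof -
  obtain x y where xy: "A = {x,y}" "x \<noteq> y" using c by (meson card_2_iff)
  have "x \<in> {p,q,r,s}" "y \<in> {p,q,r,s}" using A xy by auto
  then show ?thesis using xy d by (auto simp: insert_commute)
qed

lemma xtree_of_connected_xforest:
  assumes F: "is_xforest X F" and c: "connected_graph F" and ne: "verts F \<noteq> {}"
  shows "is_xtree X F"
proof -
  have wf: "wf_graph F" using F by (rule xforest_wf)
  have lv: "lab F ` X \<subseteq> verts F" using F by (rule xforest_lab)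
  let ?R = "{(u, v). u \<in> verts F \<and> v \<in> verts F \<and> (u, v) \<in> (adjrel F)\<^sup>*}"
  have Rx: "?R `` {x} = verts F" if "x \<in> verts F" for x
    using that c by (auto simp: connected_graph_def)
  have comp: "components F = {verts F}"
    unfolding components_def quotient_def using Rx ne by auto
  have ind: "induced F (verts F) = F"
  proof -
    have "{e \<in> edges F. e \<subseteq> verts F} = edges F" using wf by (auto simp: wf_graph_def)
    then show ?thesis by (simp add: induced_def)
  qed
  have blk: "{x \<in> X. lab F x \<in> verts F} = X" using lv by auto
  have "is_xtree {x \<in> X. lab F x \<in> verts F} (induced F (verts F))"
    using F comp unfolding is_xforest_def by blast
  then show ?thesis using blk ind by simp
qed

lemma binary_isom:
  assumes iso: "isom X H F f" and wH: "wf_graph H" and wF: "wf_graph F" and lH: "lab H ` X \<subseteq> verts H"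
    and B: "binary X H"
  shows "binary X F"
  unfolding binary_def
proof
  fix t assume t: "t \<in> verts F"
  then obtain s where s: "s \<in> verts H" "t = f s" using isom_surj[OF iso] by (metis imageE)
  have "deg F t = deg H s" using isom_deg[OF iso wH wF s(1)] s(2) by simp
  moreover have "labels X F t = labels X H s" using isom_labels[OF iso lH s(1)] s(2) by simp
  ultimately show "(deg F t = 1 \<and> card (labels X F t) = 1) \<or> (deg F t = 3 \<and> labels X F t = {})"
    using B s(1) by (simp add: binary_def)
qed

lemma inCX_xiso:
  assumes H: "in_CX X H" and iso: "xiso X H F" and F: "is_xforest X F"
  shows "in_CX X F"
proof -
  have TH: "is_xtree X H" using H by (rule inCX_xtree)
  obtain f where f: "isom X H F f" using iso xiso_isom by blast
  have wH: "wf_graph H" using TH by (rule xtree_wf)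
  have wF: "wf_graph F" using F by (rule xforest_wf)
  have c: "connected_graph F" using isom_connected[OF f wH xtree_connected[OF TH]] .
  have "verts H \<noteq> {}" using TH by (simp add: is_xtree_def is_tree_def)
  then have ne: "verts F \<noteq> {}" using isom_surj[OF f] by auto
  have TF: "is_xtree X F" using xtree_of_connected_xforest[OF F c ne] .
  have "binary X F" using binary_isom[OF f wH wF xtree_lab[OF TH] binary_of_inCX[OF H]] .
  then show ?thesis using inCX_of_binary[OF TF] by simp
qed

lemma covers_of_contract:
  assumes w: "is_xforest X w" and H: "is_xforest X H" and ab: "{a,b} \<in> edges H" "a \<noteq> b"
    and iso: "xiso X w (contract H a b)"
  shows "covers X w H"
  unfolding covers_def one_step_def using w H ab iso by blast


section \<open>Covers of the contraction of an internal edge\<close>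

lemma internal_edge_sym: "internal_edge G u v \<Longrightarrow> internal_edge G v u"
  by (auto simp: internal_edge_def insert_commute)

lemma inCX_internal_nbrs:
  assumes C: "in_CX X C" and ie: "internal_edge C a b"
  obtains \<beta>1 \<beta>2 where "nbrs C a - {b} = {\<beta>1, \<beta>2}" "\<beta>1 \<noteq> \<beta>2"
proof -
  have wC: "wf_graph C" using C inCX_xtree xtree_wf by blast
  have ab: "{a,b} \<in> edges C" and a: "a \<notin> leaves C" using ie by (auto simp: internal_edge_def)
  have "deg C a = 3" using binary_of_inCX[OF C] a wf_edge2[OF wC ab] by (auto simp: binary_def leaves_def)
  then have "card (nbrs C a - {b}) = 2"
    using card_Diff_singleton_Suc[OF nbrs_finite[OF wC], of b a] ab deg_nbrs[OF wC] by (simp add: nbrs_iff)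
  then show ?thesis using that by (meson card_2_iff)
qed

locale internal_contraction = binary_edge +
  fixes w and \<beta>1 \<beta>2 \<gamma>1 \<gamma>2 :: nat
  assumes ie: "internal_edge C a b"
    and nbrs_a: "nbrs C a - {b} = {\<beta>1, \<beta>2}" and \<beta>12: "\<beta>1 \<noteq> \<beta>2"
    and nbrs_b: "nbrs C b - {a} = {\<gamma>1, \<gamma>2}" and \<gamma>12: "\<gamma>1 \<noteq> \<gamma>2"
    and w: "is_xforest X w" and contract_iso: "xiso X w (contract C a b)"
begin

lemma deg_a: "deg C a = 3" and labels_a: "labels X C a = {}"
  and deg_b: "deg C b = 3" and labels_b: "labels X C b = {}"
  using binary_C a_in_C b_in_C ie by (auto simp: binary_def leaves_def internal_edge_def)

lemma edges_\<beta>: "{a,\<beta>1} \<in> edges C" "{a,\<beta>2} \<in> edges C" "\<beta>1 \<noteq> b" "\<beta>2 \<noteq> b"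
  using nbrs_a by (auto simp: nbrs_iff set_eq_iff)

lemma edges_\<gamma>: "{b,\<gamma>1} \<in> edges C" "{b,\<gamma>2} \<in> edges C" "\<gamma>1 \<noteq> a" "\<gamma>2 \<noteq> a"
  using nbrs_b by (auto simp: nbrs_iff set_eq_iff)

lemma \<beta>_ne_a: "\<beta>1 \<noteq> a" "\<beta>2 \<noteq> a" and \<gamma>_ne_b: "\<gamma>1 \<noteq> b" "\<gamma>2 \<noteq> b"
  using wf_edge2[OF wf_C edges_\<beta>(1)] wf_edge2[OF wf_C edges_\<beta>(2)]
    wf_edge2[OF wf_C edges_\<gamma>(1)] wf_edge2[OF wf_C edges_\<gamma>(2)] by auto

lemma \<beta>_ne_\<gamma>: "\<beta>1 \<noteq> \<gamma>1" "\<beta>1 \<noteq> \<gamma>2" "\<beta>2 \<noteq> \<gamma>1" "\<beta>2 \<noteq> \<gamma>2"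
proof -
  have ne: "x \<noteq> y" if "{a,x} \<in> edges C" "{b,y} \<in> edges C" for x y
    using no_common_ab that unfolding no_common_nbr_def by auto
  show "\<beta>1 \<noteq> \<gamma>1" "\<beta>1 \<noteq> \<gamma>2" "\<beta>2 \<noteq> \<gamma>1" "\<beta>2 \<noteq> \<gamma>2"
    using ne[OF edges_\<beta>(1) edges_\<gamma>(1)] ne[OF edges_\<beta>(1) edges_\<gamma>(2)]
      ne[OF edges_\<beta>(2) edges_\<gamma>(1)] ne[OF edges_\<beta>(2) edges_\<gamma>(2)] .
qed

lemma distinct_\<beta>\<gamma>: "distinct [\<beta>1, \<beta>2, \<gamma>1, \<gamma>2]"
  using \<beta>12 \<gamma>12 \<beta>_ne_\<gamma> by auto

lemma nbrs_C_a: "nbrs C a = {b, \<beta>1, \<beta>2}"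
  using insert_Diff[of b "nbrs C a"] nbrs_a edge_ab by (simp add: nbrs_iff)

sublocale swap1: nni_setting C a b \<beta>2 \<gamma>1
  by unfold_locales (use wf_C acyclic_C edge_ab edges_\<beta> edges_\<gamma> in auto)

sublocale swap2: nni_setting C a b \<beta>2 \<gamma>2
  by unfold_locales (use wf_C acyclic_C edge_ab edges_\<beta> edges_\<gamma> in auto)

abbreviation "N1 \<equiv> nni_swap C a \<beta>2 b \<gamma>1"
abbreviation "N2 \<equiv> nni_swap C a \<beta>2 b \<gamma>2"

abbreviation "branch \<equiv> reach_from (edges_off C a b)"

lemma branch_label:
  assumes "p \<in> {\<beta>1, \<beta>2, \<gamma>1, \<gamma>2}" shows "\<exists>x\<in>X. lab C x \<in> branch p"
proof -
  have "{a,p} \<in> edges C \<and> p \<noteq> b \<or> {b,p} \<in> edges C \<and> p \<noteq> a"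
    using assms edges_\<beta> edges_\<gamma> by auto
  then show ?thesis
  proof
    assume "{a,p} \<in> edges C \<and> p \<noteq> b"
    then show ?thesis using label_in_reach_from[OF wf_C acyclic_C binary_C edge_ab] by blast
  next
    assume "{b,p} \<in> edges C \<and> p \<noteq> a"
    then show ?thesis using label_in_reach_from[OF wf_C acyclic_C binary_C edge_ba]
      by (auto simp: edges_off_sym)
  qed
qed

lemma X_nonempty: "X \<noteq> {}"
  using branch_label[of \<beta>1] by auto

lemma branch_avoids_ab: "p \<in> {\<beta>1, \<beta>2, \<gamma>1, \<gamma>2} \<Longrightarrow> t \<in> branch p \<Longrightarrow> t \<noteq> a \<and> t \<noteq> b"
  using reach_from_edges_off[of t C a b p] \<beta>_ne_a \<gamma>_ne_b edges_\<beta> edges_\<gamma> by auto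

lemma branches_disjointI:
  assumes "(p, q) \<in> (adj (edges_off C a b))\<^sup>* \<Longrightarrow> False" shows "branch p \<inter> branch q = {}"
proof (rule ccontr)
  assume "branch p \<inter> branch q \<noteq> {}"
  then obtain t where "t \<in> branch p" "t \<in> branch q" by blast
  then have "q \<in> branch p" by (rule reach_from_meet)
  then show False using assms by (simp add: reach_from_def)
qed

lemma branches_disjoint:
  "branch \<beta>1 \<inter> branch \<beta>2 = {}" "branch \<gamma>1 \<inter> branch \<gamma>2 = {}"
  "p \<in> {\<beta>1, \<beta>2} \<Longrightarrow> q \<in> {\<gamma>1, \<gamma>2} \<Longrightarrow> branch p \<inter> branch q = {}"
proof -
  have \<beta>1: "\<beta>1 \<notin> {a,b}" and \<gamma>1: "\<gamma>1 \<notin> {b,a}" using \<beta>_ne_a edges_\<beta> \<gamma>_ne_b edges_\<gamma> by auto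
  show "branch \<beta>1 \<inter> branch \<beta>2 = {}"
    by (rule branches_disjointI, rule no_path_between_nbrs[OF wf_C acyclic_C edge_ab edges_\<beta>(1,2) \<beta>1 \<beta>12])
  show "branch \<gamma>1 \<inter> branch \<gamma>2 = {}"
    by (rule branches_disjointI, rule no_path_between_nbrs[OF wf_C acyclic_C edge_ba edges_\<gamma>(1,2) \<gamma>1 \<gamma>12])
      (simp add: edges_off_sym)
  assume p: "p \<in> {\<beta>1, \<beta>2}" and q: "q \<in> {\<gamma>1, \<gamma>2}"
  have "{a,p} \<in> edges C" "p \<notin> {a,b}" "{b,q} \<in> edges C"
    using p q edges_\<beta> edges_\<gamma> \<beta>_ne_a by auto
  then show "branch p \<inter> branch q = {}"
    by (intro branches_disjointI no_path_across_edge[OF wf_C acyclic_C edge_ab])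
qed

lemma edges_N1: "{a,\<beta>1} \<in> edges N1" "{a,\<gamma>1} \<in> edges N1" "{b,\<beta>2} \<in> edges N1" "{b,\<gamma>2} \<in> edges N1"
  using edges_\<beta> edges_\<gamma> \<beta>12 \<gamma>12 by (auto simp: nni_swap_simps doubleton_eq_iff)

lemma edges_N2: "{a,\<beta>1} \<in> edges N2" "{a,\<gamma>2} \<in> edges N2" "{b,\<beta>2} \<in> edges N2" "{b,\<gamma>1} \<in> edges N2"
  using edges_\<beta> edges_\<gamma> \<beta>12 \<gamma>12 by (auto simp: nni_swap_simps doubleton_eq_iff)

lemma edges_off_N1: "edges_off C a b \<subseteq> edges N1" and edges_off_N2: "edges_off C a b \<subseteq> edges N2"
  using swap1.edges_off_swapped swap2.edges_off_swapped edges_off_subset by metis+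

context
  fixes l1 l2 l3 l4
  assumes l1: "lab C l1 \<in> branch \<beta>1" and l2: "lab C l2 \<in> branch \<beta>2"
    and l3: "lab C l3 \<in> branch \<gamma>1" and l4: "lab C l4 \<in> branch \<gamma>2"
begin

lemma splits_quartet_C: "splits_quartet C l1 l2 l3 l4"
  by (rule splits_quartet_at_edge[OF wf_C acyclic_C edge_ab nbrs_C_a _ _ edges_\<gamma>(1,2) _ _ l1 l2 l3 l4])
    (use \<beta>_ne_a edges_\<beta> \<gamma>_ne_b edges_\<gamma> in auto)

lemma splits_quartet_N1: "splits_quartet N1 l1 l3 l2 l4"
proof -
  have "nbrs N1 a = {b, \<beta>1, \<gamma>1}" using swap1.swapped_nbrs_a nbrs_C_a \<beta>12 edges_\<beta>(4) by auto
  then show ?thesis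
    by (intro splits_quartet_at_edge[OF swap1.wf_swapped swap1.acyclic_swapped swap1.swapped_ab _ _ _
          edges_N1(3,4)])
      (use \<beta>_ne_a edges_\<beta> \<gamma>_ne_b edges_\<gamma> l1 l2 l3 l4 swap1.edges_off_swapped in
        \<open>auto simp: nni_swap_simps\<close>)
qed

lemma disjoint_sides:
  "(branch \<beta>1 \<union> branch \<gamma>1 \<union> {a}) \<inter> (branch \<beta>2 \<union> branch \<gamma>2 \<union> {b}) = {}"
  "(branch \<beta>1 \<union> branch \<gamma>2 \<union> {a}) \<inter> (branch \<beta>2 \<union> branch \<gamma>1 \<union> {b}) = {}"
  "(branch \<beta>1 \<union> branch \<gamma>2 \<union> {a}) \<inter> (branch \<gamma>1 \<union> branch \<beta>2 \<union> {b}) = {}"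
proof -
  have "a \<notin> branch p" "b \<notin> branch p" if "p \<in> {\<beta>1, \<beta>2, \<gamma>1, \<gamma>2}" for p
    using branch_avoids_ab[OF that] by blast+
  then have "a \<notin> branch \<beta>1 \<union> branch \<beta>2 \<union> branch \<gamma>1 \<union> branch \<gamma>2"
    "b \<notin> branch \<beta>1 \<union> branch \<beta>2 \<union> branch \<gamma>1 \<union> branch \<gamma>2" by simp_all
  moreover note branches_disjoint(1,2) branches_disjoint(3)[of \<beta>1 \<gamma>2] branches_disjoint(3)[of \<beta>2 \<gamma>1]
    branches_disjoint(3)[of \<beta>1 \<gamma>1] branches_disjoint(3)[of \<beta>2 \<gamma>2]
  ultimately show
    "(branch \<beta>1 \<union> branch \<gamma>1 \<union> {a}) \<inter> (branch \<beta>2 \<union> branch \<gamma>2 \<union> {b}) = {}"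
    "(branch \<beta>1 \<union> branch \<gamma>2 \<union> {a}) \<inter> (branch \<beta>2 \<union> branch \<gamma>1 \<union> {b}) = {}"
    "(branch \<beta>1 \<union> branch \<gamma>2 \<union> {a}) \<inter> (branch \<gamma>1 \<union> branch \<beta>2 \<union> {b}) = {}"
    using a_ne_b by (auto simp: disjoint_iff)
qed

lemma not_splits_quartet_N1: "\<not> splits_quartet N1 l1 l2 l3 l4"
proof
  assume "splits_quartet N1 l1 l2 l3 l4"
  then obtain S where S: "lab C l1 \<in> S" "lab C l2 \<in> S" "lab C l3 \<notin> S" "lab C l4 \<notin> S"
    "single_crossing (edges N1) S" unfolding splits_quartet_def nni_swap_simps(2) by blast
  have "{\<beta>1,a} \<in> edges N1" "{\<beta>2,b} \<in> edges N1" using edges_N1(1,3) by (simp_all add: insert_commute)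
  from not_splits_quartet[OF edges_off_N1 this(1) edges_N1(2) this(2) edges_N1(4) l1 l3 l2 l4
      disjoint_sides(1) S(1,3,2,4,5)]
  show False .
qed

lemma not_splits_quartet_N2: "\<not> splits_quartet N2 l1 l2 l3 l4" "\<not> splits_quartet N2 l1 l3 l2 l4"
proof -
  have E: "{\<beta>1,a} \<in> edges N2" "{\<beta>2,b} \<in> edges N2" "{\<gamma>1,b} \<in> edges N2"
    using edges_N2(1,3,4) by (simp_all add: insert_commute)
  show "\<not> splits_quartet N2 l1 l2 l3 l4"
  proof
    assume "splits_quartet N2 l1 l2 l3 l4"
    then obtain S where S: "lab C l1 \<in> S" "lab C l2 \<in> S" "lab C l3 \<notin> S" "lab C l4 \<notin> S"
      "single_crossing (edges N2) S" unfolding splits_quartet_def nni_swap_simps(2) by blast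
    show False by (rule not_splits_quartet[OF edges_off_N2 E(1) edges_N2(2) E(2) edges_N2(4) l1 l4 l2 l3
        disjoint_sides(2) S(1,4,2,3,5)])
  qed
  show "\<not> splits_quartet N2 l1 l3 l2 l4"
  proof
    assume "splits_quartet N2 l1 l3 l2 l4"
    then obtain S where S: "lab C l1 \<in> S" "lab C l3 \<in> S" "lab C l2 \<notin> S" "lab C l4 \<notin> S"
      "single_crossing (edges N2) S" unfolding splits_quartet_def nni_swap_simps(2) by blast
    from not_splits_quartet[OF edges_off_N2 E(1) edges_N2(2) E(3) edges_N2(3) l1 l4 l3 l2 disjoint_sides(3)
        S(1,4,2,3,5)]
    show False .
  qed
qed

end

lemma inCX_N1: "in_CX X N1" and inCX_N2: "in_CX X N2"
  using swap1.inCX_swapped[OF C] swap2.inCX_swapped[OF C] .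

text \<open>C displays the quartet l1 l2 | l3 l4, which N1 and N2 do not; N1 displays
  l1 l3 | l2 l4, which N2 does not.\<close>
lemma swaps_not_xiso: "\<not> xiso X N1 C" "\<not> xiso X N2 C" "\<not> xiso X N2 N1"
proof -
  obtain l1 l2 l3 l4 where l: "l1 \<in> X" "lab C l1 \<in> branch \<beta>1" "l2 \<in> X" "lab C l2 \<in> branch \<beta>2"
    "l3 \<in> X" "lab C l3 \<in> branch \<gamma>1" "l4 \<in> X" "lab C l4 \<in> branch \<gamma>2"
    using branch_label[of \<beta>1] branch_label[of \<beta>2] branch_label[of \<gamma>1] branch_label[of \<gamma>2]
    by (simp only: insert_iff simp_thms Bex_def) blast
  have quartet_pull: "splits_quartet N l1 l2 l3 l4"
    if iso: "xiso X N H" and N: "in_CX X N" and H: "splits_quartet H l1 l2 l3 l4"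
      and l: "l1 \<in> X" "l2 \<in> X" "l3 \<in> X" "l4 \<in> X" for N H l1 l2 l3 l4
  proof -
    obtain f where f: "isom X N H f" using iso xiso_isom by blast
    have "wf_graph N" "lab N ` X \<subseteq> verts N" using N inCX_xtree xtree_lab xtree_wf by blast+
    then show ?thesis using splits_quartet_isom[OF f _ _ l H] by blast
  qed
  note q = splits_quartet_C[OF l(2,4,6,8)] splits_quartet_N1[OF l(2,4,6,8)]
    not_splits_quartet_N1[OF l(2,4,6,8)] not_splits_quartet_N2[OF l(2,4,6,8)]
  show "\<not> xiso X N1 C" using quartet_pull[OF _ inCX_N1 q(1) l(1,3,5,7)] q(3) by (rule contrapos_nn[rotated])
  show "\<not> xiso X N2 C" using quartet_pull[OF _ inCX_N2 q(1) l(1,3,5,7)] q(4) by (rule contrapos_nn[rotated])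
  show "\<not> xiso X N2 N1" using quartet_pull[OF _ inCX_N2 q(2) l(1,5,3,7)] q(5) by (rule contrapos_nn[rotated])
qed

end

locale internal_cover = internal_contraction + contraction_cover
begin

lemma labels_uv: "labels X F u = {}" "labels X F v = {}"
  using labels_union labels_a labels_b by simp_all

lemma deg_uv: "deg F u = 3" "deg F v = 3"
proof -
  have "deg F u \<ge> 3" "deg F v \<ge> 3" using xforest_deg[OF F] u_in_F v_in_F labels_uv by auto
  then show "deg F u = 3" "deg F v = 3" using deg_sum deg_a deg_b by simp_all
qed

lemma internal_edge_uv: "internal_edge F u v"
  using edge_uv u_ne_v deg_uv by (simp add: internal_edge_def leaves_def)

abbreviation "S4 \<equiv> {\<beta>1, \<beta>2, \<gamma>1, \<gamma>2}"

lemma nbrs_contract_C: "nbrs (contract C a b) a = S4"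
  using contract_nbrs_centre_Un[OF wf_C edge_ab] nbrs_a nbrs_b by auto

lemma \<psi>_S4: "\<psi> ` S4 = (nbrs F u - {v}) \<union> (nbrs F v - {u})"
  using \<psi>_nbrs nbrs_a nbrs_b by (simp add: insert_commute)

lemma inj_\<psi>_S4: "inj_on \<psi> S4"
proof -
  have "S4 \<subseteq> verts (contract C a b)"
    using nbrs_verts[OF wf_contract[OF wf_C edge_ab]] nbrs_contract_C by blast
  then show ?thesis using isom_inj[OF \<psi>] by (rule inj_on_subset[rotated])
qed

text \<open>The isomorphism distributes the four neighbours of the contracted vertex between
  the two endpoints of the contracted edge of F.\<close>
definition side_u :: "nat set" where
  "side_u = {t \<in> S4. \<psi> t \<in> nbrs F u - {v}}"

lemma side_u_subset: "side_u \<subseteq> S4"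
  unfolding side_u_def by blast

lemma image_side_u: "\<psi> ` side_u = nbrs F u - {v}"
proof
  show "\<psi> ` side_u \<subseteq> nbrs F u - {v}" unfolding side_u_def by blast
  show "nbrs F u - {v} \<subseteq> \<psi> ` side_u"
  proof
    fix y assume y: "y \<in> nbrs F u - {v}"
    then obtain t where "t \<in> S4" "y = \<psi> t" using \<psi>_S4 by (metis UnI1 imageE)
    with y show "y \<in> \<psi> ` side_u" unfolding side_u_def by blast
  qed
qed

lemma image_side_v: "\<psi> ` (S4 - side_u) = nbrs F v - {u}"
proof
  have disj: "y \<notin> nbrs F u - {v}" if "y \<in> nbrs F v - {u}" for y
    using no_common_uv that by (auto simp: no_common_nbr_def nbrs_iff)
  show "\<psi> ` (S4 - side_u) \<subseteq> nbrs F v - {u}"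
  proof
    fix y assume "y \<in> \<psi> ` (S4 - side_u)"
    then obtain t where t: "t \<in> S4" "t \<notin> side_u" "y = \<psi> t" by blast
    then have "y \<in> (nbrs F u - {v}) \<union> (nbrs F v - {u})" using \<psi>_S4 by blast
    moreover have "y \<notin> nbrs F u - {v}" using t unfolding side_u_def by blast
    ultimately show "y \<in> nbrs F v - {u}" by blast
  qed
  show "nbrs F v - {u} \<subseteq> \<psi> ` (S4 - side_u)"
  proof
    fix y assume y: "y \<in> nbrs F v - {u}"
    then obtain t where "t \<in> S4" "y = \<psi> t" using \<psi>_S4 by (metis UnI2 imageE)
    with y disj[OF y] show "y \<in> \<psi> ` (S4 - side_u)" unfolding side_u_def by blast
  qed
qed

lemma card_side_u: "card side_u = 2"
proof -
  have "card (nbrs F u - {v}) = 2"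
    using card_Diff_singleton_Suc[OF nbrs_finite[OF wf_F], of v u] edge_uv deg_uv deg_nbrs[OF wf_F, of u]
    by (simp add: nbrs_iff)
  then show ?thesis
    using image_side_u card_image[OF inj_on_subset[OF inj_\<psi>_S4 side_u_subset]] by simp
qed

lemma xiso_of_side:
  assumes H: "wf_graph H" "{a,b} \<in> edges H" "no_common_nbr H a b" "contract H a b = contract C a b"
    "lab H ` X \<subseteq> verts H" "labels X H a = {}"
    and side: "nbrs H a - {b} = side_u \<or> nbrs H a - {b} = S4 - side_u"
  shows "xiso X H F"
proof -
  from side have "(\<psi> ` (nbrs H a - {b}) = nbrs F u - {v} \<and> labels X H a = labels X F u) \<or>
        (\<psi> ` (nbrs H a - {b}) = nbrs F v - {u} \<and> labels X H a = labels X F v)"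
    using image_side_u image_side_v labels_uv H(6) by (elim disjE) simp_all
  then show ?thesis by (rule xiso_of_uncontraction[OF H(1-5)])
qed

text \<open>The two-element set side_u is one of the three splittings
  \<beta>1\<beta>2|\<gamma>1\<gamma>2, \<beta>1\<gamma>1|\<beta>2\<gamma>2, \<beta>1\<gamma>2|\<beta>2\<gamma>1, realised by C, N1 and N2.\<close>
lemma xiso_C_N1_N2: "xiso X C F \<or> xiso X N1 F \<or> xiso X N2 F"
proof -
  have "nbrs N1 a - {b} = {\<beta>1, \<gamma>1}" "nbrs N2 a - {b} = {\<beta>1, \<gamma>2}"
    using swap1.swapped_nbrs_a swap2.swapped_nbrs_a nbrs_C_a \<beta>12 edges_\<beta> \<gamma>_ne_b by auto
  moreover have "S4 - {\<gamma>1, \<gamma>2} = {\<beta>1, \<beta>2}" "S4 - {\<beta>2, \<gamma>2} = {\<beta>1, \<gamma>1}"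
    "S4 - {\<beta>2, \<gamma>1} = {\<beta>1, \<gamma>2}"
    using distinct_\<beta>\<gamma> by auto
  moreover have "xiso X C F" if "nbrs C a - {b} = side_u \<or> nbrs C a - {b} = S4 - side_u"
    using xiso_of_side[OF wf_C edge_ab no_common_ab refl lab_C labels_a that] .
  moreover have "xiso X N1 F" if "nbrs N1 a - {b} = side_u \<or> nbrs N1 a - {b} = S4 - side_u"
    using xiso_of_side[OF swap1.wf_swapped swap1.swapped_ab swap1.swapped_no_common_nbr
        swap1.contract_swapped _ _ that] lab_C labels_a swap1.labels_swapped
    by (simp add: nni_swap_simps)
  moreover have "xiso X N2 F" if "nbrs N2 a - {b} = side_u \<or> nbrs N2 a - {b} = S4 - side_u"
    using xiso_of_side[OF swap2.wf_swapped swap2.swapped_ab swap2.swapped_no_common_nbr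
        swap2.contract_swapped _ _ that] lab_C labels_a swap2.labels_swapped
    by (simp add: nni_swap_simps)
  ultimately show ?thesis
    using card_2_subset_of_4[OF distinct_\<beta>\<gamma> side_u_subset card_side_u] nbrs_a by metis
qed

end

lemma internal_contractionI:
  assumes "in_CX X C" "finite X" "internal_edge C a b" "is_xforest X w" "xiso X w (contract C a b)"
  obtains \<beta>1 \<beta>2 \<gamma>1 \<gamma>2 where "internal_contraction X C a b w \<beta>1 \<beta>2 \<gamma>1 \<gamma>2"
proof -
  obtain \<beta>1 \<beta>2 where "nbrs C a - {b} = {\<beta>1, \<beta>2}" "\<beta>1 \<noteq> \<beta>2"
    using inCX_internal_nbrs[OF assms(1,3)] .
  moreover obtain \<gamma>1 \<gamma>2 where "nbrs C b - {a} = {\<gamma>1, \<gamma>2}" "\<gamma>1 \<noteq> \<gamma>2"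
    using inCX_internal_nbrs[OF assms(1) internal_edge_sym[OF assms(3)]] .
  ultimately show ?thesis
    using that assms by (simp add: internal_contraction_def internal_contraction_axioms_def
        binary_edge_def internal_edge_def)
qed

lemma covers_lab: "covers X w F \<Longrightarrow> lab F ` X \<subseteq> verts F"
  by (simp add: covers_def xforest_lab)

lemma card_cover_classes:
  assumes covers: "\<And>H. H \<in> Hs \<Longrightarrow> covers X w H"
    and exhaust: "\<And>F. covers X w F \<Longrightarrow> \<exists>H\<in>Hs. xiso X F H"
    and distinct: "\<And>H H'. H \<in> Hs \<Longrightarrow> H' \<in> Hs \<Longrightarrow> xiso X H H' \<Longrightarrow> H = H'"
  shows "card (cover_classes X w) = card Hs"
proof -
  let ?cls = "\<lambda>H. {(F, G). xiso X F G} `` {H}"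
  have cls: "?cls H = {G. xiso X H G}" for H by auto
  have cls_eq: "?cls F = ?cls H" if F: "covers X w F" and FH: "xiso X F H" for F H
  proof -
    have "xiso X H F" using xiso_sym[OF covers_lab[OF F] FH] .
    then have "xiso X F G \<longleftrightarrow> xiso X H G" for G using FH xiso_trans by metis
    then show ?thesis unfolding cls by (rule Collect_cong)
  qed
  have "cover_classes X w = ?cls ` Hs"
  proof
    show "cover_classes X w \<subseteq> ?cls ` Hs"
    proof
      fix K assume "K \<in> cover_classes X w"
      then obtain F where F: "covers X w F" "K = ?cls F"
        unfolding cover_classes_def quotient_def by blast
      then obtain H where "H \<in> Hs" "xiso X F H" using exhaust by blast
      then show "K \<in> ?cls ` Hs" using cls_eq[OF F(1)] F(2) by blast
    qed
    show "?cls ` Hs \<subseteq> cover_classes X w"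
      unfolding cover_classes_def quotient_def using covers by blast
  qed
  moreover have "inj_on ?cls Hs"
  proof
    fix H H' assume H: "H \<in> Hs" "H' \<in> Hs" and eq: "?cls H = ?cls H'"
    have "H' \<in> ?cls H'" using xiso_refl by blast
    then show "H = H'" using distinct[OF H] eq by blast
  qed
  ultimately show ?thesis by (simp add: card_image)
qed

context internal_contraction
begin

lemma xforest_C: "is_xforest X C" and xforest_N1: "is_xforest X N1" and xforest_N2: "is_xforest X N2"
  using xforest_of_xtree[OF inCX_xtree X_nonempty] C inCX_N1 inCX_N2 by blast+

lemma covers_C: "covers X w C" and covers_N1: "covers X w N1" and covers_N2: "covers X w N2"
  using covers_of_contract[OF w _ _ a_ne_b] xforest_C xforest_N1 xforest_N2 edge_ab
    swap1.swapped_ab swap2.swapped_ab swap1.contract_swapped swap2.contract_swapped contract_iso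
  by simp_all

lemma cover_cases:
  assumes cov: "covers X w F"
  shows "xiso X C F \<or> xiso X N1 F \<or> xiso X N2 F"
    and "\<exists>u v. internal_edge F u v \<and> xiso X w (contract F u v)"
proof -
  obtain u v \<psi> where uv: "{u,v} \<in> edges F" "xiso X w (contract F u v)"
    and \<psi>: "isom X (contract C a b) (contract F u v) \<psi>"
    using cover_contraction_isom[OF inCX_xtree[OF C] edge_ab contract_iso w cov] by blast
  interpret internal_cover X C a b w \<beta>1 \<beta>2 \<gamma>1 \<gamma>2 F u v \<psi>
    using internal_contraction_axioms cov uv(1) \<psi>
    by (simp add: internal_cover_def contraction_cover_def contraction_cover_axioms_def covers_def
        internal_contraction_def)
  show "xiso X C F \<or> xiso X N1 F \<or> xiso X N2 F" by (rule xiso_C_N1_N2)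
  show "\<exists>u v. internal_edge F u v \<and> xiso X w (contract F u v)" using internal_edge_uv uv(2) by blast
qed

lemma covers_inCX: "covers X w F \<Longrightarrow> in_CX X F"
proof -
  assume cov: "covers X w F"
  then have F: "is_xforest X F" by (simp add: covers_def)
  from cover_cases(1)[OF cov] show "in_CX X F"
    using inCX_xiso[OF C _ F] inCX_xiso[OF inCX_N1 _ F] inCX_xiso[OF inCX_N2 _ F] by blast
qed

lemma covers_nni: "covers X w G \<Longrightarrow> \<not> xiso X G C \<Longrightarrow> is_nni X C a b G"
proof -
  assume cov: "covers X w G" and G: "\<not> xiso X G C"
  have "xiso X G N1 \<or> xiso X G N2"
    using cover_cases(1)[OF cov] G xiso_sym lab_C xforest_lab[OF xforest_N1] xforest_lab[OF xforest_N2]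
    by blast
  then show "is_nni X C a b G"
    unfolding is_nni_def using ie edges_\<beta>(2,4) edges_\<gamma> by blast
qed

lemma card_cover_classes_3: "card (cover_classes X w) = 3"
proof -
  have sym: "xiso X C G \<Longrightarrow> xiso X G C" "xiso X N1 G \<Longrightarrow> xiso X G N1" "xiso X N2 G \<Longrightarrow> xiso X G N2" for G
    using xiso_sym[OF lab_C] xiso_sym[OF xforest_lab[OF xforest_N1]] xiso_sym[OF xforest_lab[OF xforest_N2]]
    by blast+
  have not_xiso: "\<not> xiso X C N1" "\<not> xiso X C N2" "\<not> xiso X N1 N2"
    using swaps_not_xiso sym by blast+
  have "card (cover_classes X w) = card {C, N1, N2}"
  proof (rule card_cover_classes)
    show "covers X w H" if "H \<in> {C, N1, N2}" for H using that covers_C covers_N1 covers_N2 by blast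
    show "\<exists>H\<in>{C, N1, N2}. xiso X F H" if "covers X w F" for F
      using cover_cases(1)[OF that] sym by blast
    show "H = H'" if "H \<in> {C, N1, N2}" "H' \<in> {C, N1, N2}" "xiso X H H'" for H H'
      using that not_xiso swaps_not_xiso by auto
  qed
  moreover have "C \<noteq> N1" "C \<noteq> N2" "N1 \<noteq> N2" using not_xiso xiso_refl by metis+
  ultimately show ?thesis by simp
qed

lemma covers_nni_pairwise:
  assumes F: "covers X w F" and G: "covers X w G" and FG: "\<not> xiso X F G"
  shows "\<exists>u v. internal_edge F u v \<and> xiso X w (contract F u v) \<and> is_nni X F u v G"
proof -
  obtain u v where uv: "internal_edge F u v" "xiso X w (contract F u v)" using cover_cases(2)[OF F] by blast
  obtain \<beta>1' \<beta>2' \<gamma>1' \<gamma>2' where I: "internal_contraction X F u v w \<beta>1' \<beta>2' \<gamma>1' \<gamma>2'"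
    using internal_contractionI[OF covers_inCX[OF F] fin uv(1) w uv(2)] .
  have "\<not> xiso X G F" using FG xiso_sym[OF covers_lab[OF G]] by blast
  then show ?thesis using internal_contraction.covers_nni[OF I G] uv by blast
qed

end

lemma inCX_cover_contract:
  assumes C: "in_CX X C" and X3: "card X \<ge> 3" and cov: "covers X w C"
  obtains a b where "internal_edge C a b \<or> leaf_edge C a b" "xiso X w (contract C a b)"
proof -
  obtain G where G: "one_step X C G" "xiso X w G" using cov by (auto simp: covers_def)
  then obtain a b where "a \<noteq> b" "{a,b} \<in> edges C" "xiso X w (contract C a b)"
    using inCX_one_step_contract[OF C X3 G(1)] by blast
  then show ?thesis using that by (auto simp: internal_edge_def leaf_edge_def)
qed

lemma card_cover_classes_1:
  assumes "covers X w C" "\<And>F. covers X w F \<Longrightarrow> xiso X F C"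
  shows "card (cover_classes X w) = 1"
  using card_cover_classes[of "{C}" X w] assms by simp

lemma internal_contraction_covers:
  assumes C: "in_CX X C" and fin: "finite X" and ie: "internal_edge C u v"
    and w: "is_xforest X w" and iso: "xiso X w (contract C u v)"
  shows "(\<forall>F. covers X w F \<longrightarrow> in_CX X F) \<and>
      (\<forall>G. covers X w G \<and> \<not> xiso X G C \<longrightarrow> is_nni X C u v G) \<and>
      (\<forall>F G. covers X w F \<and> covers X w G \<and> \<not> xiso X F G \<longrightarrow>
        (\<exists>u' v'. internal_edge F u' v' \<and> xiso X w (contract F u' v') \<and> is_nni X F u' v' G))"
proof -
  obtain \<beta>1 \<beta>2 \<gamma>1 \<gamma>2 where I: "internal_contraction X C u v w \<beta>1 \<beta>2 \<gamma>1 \<gamma>2"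
    using internal_contractionI[OF C fin ie w iso] .
  show ?thesis using internal_contraction.covers_inCX[OF I] internal_contraction.covers_nni[OF I]
      internal_contraction.covers_nni_pairwise[OF I] by blast
qed

lemma cover_classes_dichotomy:
  assumes fin: "finite X" and X3: "card X \<ge> 3" and C: "in_CX X C" and w: "is_xforest X w"
    and cov: "covers X w C"
  shows "(card (cover_classes X w) = 3 \<longleftrightarrow> (\<exists>u v. internal_edge C u v \<and> xiso X w (contract C u v)))
    \<and> ((\<forall>F. covers X w F \<longrightarrow> xiso X F C) \<longleftrightarrow> (\<exists>u v. leaf_edge C u v \<and> xiso X w (contract C u v)))"
proof -
  obtain a b where ab: "internal_edge C a b \<or> leaf_edge C a b" "xiso X w (contract C a b)"
    using inCX_cover_contract[OF C X3 cov] .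
  have leaf: "xiso X F C" if "leaf_edge C u v" "xiso X w (contract C u v)" "covers X w F" for u v F
    using leaf_edge_unique_cover[OF C fin X3 that(1,2) w that(3)] .
  have card_internal: "card (cover_classes X w) = 3"
    if ie: "internal_edge C u v" and iso: "xiso X w (contract C u v)" for u v
  proof -
    obtain \<beta>1 \<beta>2 \<gamma>1 \<gamma>2 where "internal_contraction X C u v w \<beta>1 \<beta>2 \<gamma>1 \<gamma>2"
      using internal_contractionI[OF C fin ie w iso] .
    then show ?thesis by (rule internal_contraction.card_cover_classes_3)
  qed
  show ?thesis
  proof (cases "internal_edge C a b")
    case True
    then obtain \<beta>1 \<beta>2 \<gamma>1 \<gamma>2 where I: "internal_contraction X C a b w \<beta>1 \<beta>2 \<gamma>1 \<gamma>2"
      using internal_contractionI[OF C fin _ w ab(2)] by blast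
    have "\<not> (\<forall>F. covers X w F \<longrightarrow> xiso X F C)"
      using internal_contraction.covers_N1[OF I] internal_contraction.swaps_not_xiso(1)[OF I] by blast
    then show ?thesis using card_internal[OF True ab(2)] True ab(2) leaf by blast
  next
    case False
    then have "\<forall>F. covers X w F \<longrightarrow> xiso X F C" using ab leaf by blast
    then show ?thesis using card_cover_classes_1[OF cov] card_internal ab False by fastforce
  qed
qed

theorem mainTheorem4:
  fixes X :: "'x set" and C w :: "'x xgraph"
  assumes "finite X" and "card X \<ge> 3"
    and "in_CX X C"
    and "is_xforest X w"
    and "covers X w C"
  shows "(card (cover_classes X w) = 3 \<longleftrightarrow>
            (\<exists>u v. internal_edge C u v \<and> xiso X w (contract C u v)))
       \<and> (\<forall>u v. internal_edge C u v \<and> xiso X w (contract C u v) \<longrightarrow>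
            (\<forall>F. covers X w F \<longrightarrow> in_CX X F) \<and>
            (\<forall>G. covers X w G \<and> \<not> xiso X G C \<longrightarrow> is_nni X C u v G) \<and>
            (\<forall>F G. covers X w F \<and> covers X w G \<and> \<not> xiso X F G \<longrightarrow>
               (\<exists>u' v'. internal_edge F u' v' \<and> xiso X w (contract F u' v') \<and>
                        is_nni X F u' v' G)))
       \<and> ((\<forall>F. covers X w F \<longrightarrow> xiso X F C) \<longleftrightarrow>
            (\<exists>u v. leaf_edge C u v \<and> xiso X w (contract C u v)))"
proof -
  have "\<forall>u v. internal_edge C u v \<and> xiso X w (contract C u v) \<longrightarrow>
      (\<forall>F. covers X w F \<longrightarrow> in_CX X F) \<and>
      (\<forall>G. covers X w G \<and> \<not> xiso X G C \<longrightarrow> is_nni X C u v G) \<and>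
      (\<forall>F G. covers X w F \<and> covers X w G \<and> \<not> xiso X F G \<longrightarrow>
        (\<exists>u' v'. internal_edge F u' v' \<and> xiso X w (contract F u' v') \<and> is_nni X F u' v' G))"
    using internal_contraction_covers[OF assms(3,1) _ assms(4)] by blast
  then show ?thesis using cover_classes_dichotomy[OF assms] by blast
qed

end
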